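(* Let $G\in\mathfrak{M}$, $\phi=\phi_G$, $\operatorname{Arg}=\operatorname{Arg}_G$ and $E=E^G$. Then $$\operatorname{dom}\operatorname{Arg}\setminus(\operatorname{dom}\nabla\phi\cap\operatorname{udom}\operatorname{Arg})=D\cup E,$$ where $D$ is a countable union of sets belonging to $\mathcal{D}$.
   Context: $c(x,y)=(x_1-y_1)(x_2-y_2)$ for $x,y\in\mathbb{R}^2$. $\mathfrak{M}$: family of maximal monotone sets in $\mathbb{R}^2$ (monotone: $c(r,s)\ge0$ for $r,s\in G$; maximal: not a proper subset of a monotone set). $\phi_G(y)=\inf_{x\in G}c(x,y)\in[-\infty,0]$; $\operatorname{dom}\phi=\{\phi>-\infty\}$ (convex). For $y$ in the interior of $\operatorname{dom}\phi$, $\nabla\phi(y)$ is the classical gradient when it exists; for $y$ in the relative boundary of $\operatorname{dom}\phi$, $\nabla\phi(y)$ exists if $\nabla\phi(y^n)$ converges to a common limit for every sequence $y^n\to y$ of interior points of $\operatorname{dom}\phi$ at which $\phi$ is differentiable; $\operatorname{dom}\nabla\phi$ is the set of $y\in\operatorname{dom}\phi$ where $\nabla\phi(y)$ exists. $\operatorname{Arg}_G(y)=\{x\in G:\phi_G(y)=c(x,y)\}$, $\operatorname{dom}\operatorname{Arg}_G=\{y:\operatorname{Arg}_G(y)\neq\emptyset\}$, $\operatorname{udom}\operatorname{Arg}_G=\{y:\operatorname{Arg}_G(y)\text{ is a singleton}\}$. For $i=1,2$, $t\in\mathbb{R}$: $E^G_i(t)=\{x\in G:x_i=t\}$, $\mathcal{T}^G_i=\{t:E^G_i(t)\text{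 has more than one point}\}$, $E^G=\bigcup_{i=1,2}\bigcup_{t\in\mathcal{T}^G_i}E^G_i(t)$. $\mathcal{D}$ is the family of graphs of strictly decreasing functions $h$ defined on closed intervals of $\mathbb{R}$ (possibly a single point, so every singleton of $\mathbb{R}^2$ is in $\mathcal{D}$) such that for some $K>0$, $\frac1K(t-s)\le h(s)-h(t)\le K(t-s)$ for $s<t$. *)

theory Defs
  imports "HOL-Analysis.Analysis"
begin

type_synonym pt = "real \<times> real"

definition cost :: "pt \<Rightarrow> pt \<Rightarrow> real" where
  "cost x y = (fst x - fst y) * (snd x - snd y)"

definition monotone_set :: "pt set \<Rightarrow> bool" where
  "monotone_set G \<longleftrightarrow> (\<forall>r\<in>G. \<forall>s\<in>G. cost r s \<ge> 0)"

definition maximal_monotone :: "pt set \<Rightarrow> bool" where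
  "maximal_monotone G \<longleftrightarrow> monotone_set G \<and> \<not> (\<exists>H. monotone_set H \<and> G \<subset> H)"

definition phi :: "pt set \<Rightarrow> pt \<Rightarrow> ereal" where
  "phi G y = (INF x\<in>G. ereal (cost x y))"

definition dom_phi :: "pt set \<Rightarrow> pt set" where
  "dom_phi G = {y. phi G y > -\<infinity>}"

text \<open>Real-valued version of phi (meaningful on dom phi).\<close>
definition phi_r :: "pt set \<Rightarrow> pt \<Rightarrow> real" where
  "phi_r G y = real_of_ereal (phi G y)"

definition diff_pts :: "pt set \<Rightarrow> pt set" where
  "diff_pts G = {y \<in> interior (dom_phi G). phi_r G differentiable (at y)}"

definition grad_phi :: "pt set \<Rightarrow> pt \<Rightarrow> pt" where
  "grad_phi G y = (THE g. (phi_r G has_derivative (\<lambda>h. g \<bullet> h)) (at y))"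

definition dom_grad :: "pt set \<Rightarrow> pt set" where
  "dom_grad G = {y \<in> dom_phi G.
      (y \<in> interior (dom_phi G) \<and> phi_r G differentiable (at y)) \<or>
      (y \<in> rel_frontier (dom_phi G) \<and>
        (\<exists>L. \<forall>Y::nat \<Rightarrow> pt. (\<forall>n. Y n \<in> diff_pts G) \<longrightarrow> Y \<longlonglongrightarrow> y \<longrightarrow>
              (\<lambda>n. grad_phi G (Y n)) \<longlonglongrightarrow> L))}"

definition Arg :: "pt set \<Rightarrow> pt \<Rightarrow> pt set" where
  "Arg G y = {x \<in> G. phi G y = ereal (cost x y)}"

definition dom_Arg :: "pt set \<Rightarrow> pt set" where
  "dom_Arg G = {y. Arg G y \<noteq> {}}"

definition udom_Arg :: "pt set \<Rightarrow> pt set" where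
  "udom_Arg G = {y. \<exists>x. Arg G y = {x}}"

definition coord :: "nat \<Rightarrow> pt \<Rightarrow> real" where
  "coord i x = (if i = 1 then fst x else snd x)"

definition E_i :: "pt set \<Rightarrow> nat \<Rightarrow> real \<Rightarrow> pt set" where
  "E_i G i t = {x \<in> G. coord i x = t}"

definition T_i :: "pt set \<Rightarrow> nat \<Rightarrow> real set" where
  "T_i G i = {t. \<exists>x y. x \<in> E_i G i t \<and> y \<in> E_i G i t \<and> x \<noteq> y}"

definition E_set :: "pt set \<Rightarrow> pt set" where
  "E_set G = (\<Union>i\<in>{1,2}. \<Union>t\<in>T_i G i. E_i G i t)"

definition class_D :: "pt set set" where
  "class_D = {S. \<exists>a b (h::real \<Rightarrow> real). a \<le> b \<and>
      (\<forall>s\<in>{a..b}. \<forall>t\<in>{a..b}. s < t \<longrightarrow> h t < h s) \<and>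
      (\<exists>K>0. \<forall>s\<in>{a..b}. \<forall>t\<in>{a..b}. s < t \<longrightarrow>
          (t - s) / K \<le> h s - h t \<and> h s - h t \<le> K * (t - s)) \<and>
      S = {(t, h t) | t. t \<in> {a..b}}}"

end

theory Submission
  imports Defs
begin

text \<open>
  By maximality every point outside \<open>G\<close> has negative cost against some point of \<open>G\<close>, so
  \<open>dom \<phi>\<close> lies in the closed box spanned by \<open>G\<close> and its interior is the open box. There the
  minimisers are locally bounded and upper semicontinuous, and Danskin's argument shows that
  \<open>\<phi>\<close> is differentiable with gradient \<open>(y\<^sub>2 - x\<^sub>2, y\<^sub>1 - x\<^sub>1)\<close> wherever the
  minimiser \<open>x\<close> is unique; the same holds at a boundary point unless its minimisers escape to
  infinity, which happens at no more than one point per direction. A point with several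
  minimisers lies in \<open>E\<close> if it belongs to \<open>G\<close>; otherwise its minimisers are strictly ordered
  in both coordinates. Since \<open>y \<mapsto> Arg (y\<^sub>2, y\<^sub>1)\<close> is a monotone map, the convex hulls of
  minimisers have pairwise disjoint interiors, so only countably many points have three
  minimisers; on each side of the box the minimiser intervals are disjoint, so only countably
  many boundary points have several minimisers. Finally, the points with two minimisers
  \<open>u < a < v\<close> around a fixed rational \<open>a\<close> form an antichain on which monotonicity gives
  bi-Lipschitz bounds, and a connectedness argument along vertical segments shows that near
  each of them this antichain is the graph of a function: countably many graphs in \<open>\<D>\<close>
  cover all of them.
\<close>

section \<open>Minimisers and maximal monotone sets\<close>

lemma cost_commute: "cost x y = cost y x"
  unfolding cost_def by (simp add: algebra_simps)

lemma cost_self [simp]: "cost x x = 0"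
  by (simp add: cost_def)

lemma cost_eq_0_iff: "cost w y = 0 \<longleftrightarrow> fst w = fst y \<or> snd w = snd y"
  by (simp add: cost_def)

lemma Arg_iff: "x \<in> Arg G y \<longleftrightarrow> x \<in> G \<and> (\<forall>z\<in>G. cost x y \<le> cost z y)"
proof (cases "x \<in> G")
  case True
  have "phi G y \<le> ereal (cost x y)"
    unfolding phi_def using True by (rule INF_lower)
  moreover have "phi G y \<ge> ereal (cost x y) \<longleftrightarrow> (\<forall>z\<in>G. cost x y \<le> cost z y)"
    unfolding phi_def by (simp add: le_INF_iff)
  ultimately show ?thesis
    unfolding Arg_def using True by auto
qed (simp add: Arg_def)

lemma ArgI: "x \<in> G \<Longrightarrow> (\<And>z. z \<in> G \<Longrightarrow> cost x y \<le> cost z y) \<Longrightarrow> x \<in> Arg G y"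
  by (simp add: Arg_iff)

lemma Arg_in: "x \<in> Arg G y \<Longrightarrow> x \<in> G"
  by (simp add: Arg_iff)

lemma Arg_le: "x \<in> Arg G y \<Longrightarrow> z \<in> G \<Longrightarrow> cost x y \<le> cost z y"
  by (simp add: Arg_iff)

lemma Arg_cost_eq: "x \<in> Arg G y \<Longrightarrow> x' \<in> Arg G y \<Longrightarrow> cost x y = cost x' y"
  by (meson Arg_in Arg_le order_antisym)

lemma phi_r_Arg: "x \<in> Arg G y \<Longrightarrow> phi_r G y = cost x y"
  by (simp add: Arg_def phi_r_def)

lemma dom_Arg_subset_dom_phi: "dom_Arg G \<subseteq> dom_phi G"
  by (auto simp: dom_Arg_def dom_phi_def Arg_def)

lemma not_in_dom_phi:
  assumes "\<And>r. \<exists>z\<in>G. cost z y < r"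
  shows "y \<notin> dom_phi G"
proof -
  have "phi G y \<le> ereal r" for r
    using assms[of r] unfolding phi_def by (meson INF_lower2 ereal_less_eq(3) less_imp_le)
  then have "phi G y = -\<infinity>"
    by (metis ereal_bot)
  then show ?thesis
    by (simp add: dom_phi_def)
qed

lemma Arg_monotone:
  assumes "x \<in> Arg G z" "x' \<in> Arg G z'"
  shows "0 \<le> (fst x' - fst x) * (snd z' - snd z) + (snd x' - snd x) * (fst z' - fst z)"
proof -
  have "cost x z \<le> cost x' z" "cost x' z' \<le> cost x z'"
    using assms by (auto intro: Arg_le Arg_in)
  moreover have "cost x z + cost x' z' - cost x' z - cost x z' =
      - ((fst x' - fst x) * (snd z' - snd z) + (snd x' - snd x) * (fst z' - fst z))"
    unfolding cost_def by (simp add: algebra_simps)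
  ultimately show ?thesis
    by linarith
qed

definition open_box :: "pt set \<Rightarrow> pt set" where
  "open_box G = {y. (\<exists>z\<in>G. fst y < fst z) \<and> (\<exists>z\<in>G. fst z < fst y) \<and>
                    (\<exists>z\<in>G. snd y < snd z) \<and> (\<exists>z\<in>G. snd z < snd y)}"

lemma open_open_box: "open (open_box G)"
proof -
  have "open_box G = (\<Union>z\<in>G. {y. fst y < fst z}) \<inter> (\<Union>z\<in>G. {y. fst z < fst y}) \<inter>
      (\<Union>z\<in>G. {y. snd y < snd z}) \<inter> (\<Union>z\<in>G. {y. snd z < snd y})"
    unfolding open_box_def by auto
  also have "open \<dots>"
    by (intro open_Int open_UN ballI open_Collect_less continuous_intros)
  finally show ?thesis .
qed

lemma abs_fst_le_dist: "\<bar>fst a - fst b\<bar> \<le> dist a b"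
  using dist_fst_le[of a b] by (simp add: dist_real_def)

lemma abs_snd_le_dist: "\<bar>snd a - snd b\<bar> \<le> dist a b"
  using dist_snd_le[of a b] by (simp add: dist_real_def)

lemma dist_le_abs_fst_abs_snd: "dist (a::pt) b \<le> \<bar>fst a - fst b\<bar> + \<bar>snd a - snd b\<bar>"
proof -
  have "a - b = (fst a - fst b, snd a - snd b)"
    by (simp add: prod_eq_iff)
  then show ?thesis
    using norm_Pair_le[of "fst a - fst b" "snd a - snd b"] by (simp add: dist_norm)
qed

lemma norm_le_abs_fst_abs_snd: "norm (x::pt) \<le> \<bar>fst x\<bar> + \<bar>snd x\<bar>"
  using dist_le_abs_fst_abs_snd[of x 0] by simp

lemma abs_fst_le_norm: "\<bar>fst (x::pt)\<bar> \<le> norm x"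
  using abs_fst_le_dist[of x 0] by simp

lemma abs_snd_le_norm: "\<bar>snd (x::pt)\<bar> \<le> norm x"
  using abs_snd_le_dist[of x 0] by simp

locale max_monotone =
  fixes G :: "pt set"
  assumes maximal_monotone: "maximal_monotone G"
begin

lemma monotone: "r \<in> G \<Longrightarrow> s \<in> G \<Longrightarrow> 0 \<le> cost r s"
  using maximal_monotone unfolding maximal_monotone_def monotone_set_def by auto

lemma maximal: "monotone_set H \<Longrightarrow> G \<subseteq> H \<Longrightarrow> H = G"
  using maximal_monotone unfolding maximal_monotone_def by auto

lemma comparable:
  assumes "r \<in> G" "s \<in> G"
  shows "(fst r \<le> fst s \<and> snd r \<le> snd s) \<or> (fst s \<le> fst r \<and> snd s \<le> snd r)"
  using monotone[OF assms] by (auto simp: cost_def zero_le_mult_iff)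

lemma mem_if_cost_nonneg:
  assumes "\<And>z. z \<in> G \<Longrightarrow> 0 \<le> cost z y"
  shows "y \<in> G"
proof -
  have "monotone_set (insert y G)"
    unfolding monotone_set_def using assms monotone by (auto simp: cost_commute)
  then have "insert y G = G"
    by (rule maximal) auto
  then show ?thesis
    by auto
qed

lemma exists_cost_neg: "y \<notin> G \<Longrightarrow> \<exists>z\<in>G. cost z y < 0"
  using mem_if_cost_nonneg[of y] by (meson not_le)

lemma exists_cost_nonpos: "\<exists>z\<in>G. cost z y \<le> 0"
  using exists_cost_neg[of y] cost_self[of y] by (cases "y \<in> G") force+

lemma Arg_cost_nonpos: "x \<in> Arg G y \<Longrightarrow> cost x y \<le> 0"
  using exists_cost_nonpos[of y] by (auto dest: Arg_le)

lemma Arg_self: "y \<in> G \<Longrightarrow> y \<in> Arg G y"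
  by (rule ArgI) (auto intro: monotone)

lemma Arg_of_mem:
  assumes "y \<in> G"
  shows "Arg G y = {w\<in>G. cost w y = 0}"
proof -
  have "0 \<le> cost z y" if "z \<in> G" for z
    using monotone[OF that assms] .
  moreover have "cost w y = 0" if "w \<in> Arg G y" for w
    using Arg_cost_eq[OF that Arg_self[OF assms]] by simp
  ultimately show ?thesis
    by (auto intro: ArgI Arg_in)
qed

lemma closed: "closed G"
proof -
  have "closure G \<times> closure G \<subseteq> {p. 0 \<le> cost (fst p) (snd p)}"
  proof (subst closure_Times [symmetric], rule closure_minimal)
    show "G \<times> G \<subseteq> {p. 0 \<le> cost (fst p) (snd p)}"
      using monotone by auto
    show "closed {p :: pt \<times> pt. 0 \<le> cost (fst p) (snd p)}"
      unfolding cost_def by (intro closed_Collect_le continuous_intros)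
  qed
  then have "monotone_set (closure G)"
    unfolding monotone_set_def by auto
  then have "closure G = G"
    by (rule maximal) (rule closure_subset)
  then show ?thesis
    by (metis closed_closure)
qed

lemma not_bounded_above: "\<exists>z\<in>G. a < fst z \<or> b < snd z"
proof (rule ccontr)
  assume "\<not> ?thesis"
  then have "0 \<le> cost z (a + 1, b + 1)" if "z \<in> G" for z
    using that by (auto simp: cost_def intro!: mult_nonpos_nonpos)
  then have "(a + 1, b + 1) \<in> G"
    by (rule mem_if_cost_nonneg)
  with \<open>\<not> ?thesis\<close> show False
    by force
qed

end

section \<open>Coordinate symmetries\<close>

definition antiswap :: "pt \<Rightarrow> pt" where
  "antiswap p = (- snd p, - fst p)"

lemma fst_antiswap [simp]: "fst (antiswap p) = - snd p"
  and snd_antiswap [simp]: "snd (antiswap p) = - fst p"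
  by (simp_all add: antiswap_def)

text \<open>The reflections \<open>prod.swap\<close>, \<open>uminus\<close> and \<open>antiswap\<close> preserve the cost and
  permute the four sides of the box, so each statement about one side of the box is proved
  once and transferred to the other three.\<close>

locale cost_symmetry =
  fixes f :: "pt \<Rightarrow> pt"
  assumes involutive [simp]: "f (f p) = p"
    and cost_image [simp]: "cost (f a) (f b) = cost a b"
    and dist_image [simp]: "dist (f a) (f b) = dist a b"
    and open_box_image: "f y \<in> open_box (f ` G) \<longleftrightarrow> y \<in> open_box G"
begin

lemma mem_image_iff [simp]: "f x \<in> f ` S \<longleftrightarrow> x \<in> S"
  by (metis image_iff involutive)

lemma image_image_eq [simp]: "f ` f ` S = S"
  by (simp add: image_image)

lemma vimage_eq_image: "f -` S = f ` S"
  by (metis image_image_eq surj_def surj_image_vimage_eq involutive)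

lemma countable_vimage: "countable S \<Longrightarrow> countable (f -` S)"
  by (simp add: vimage_eq_image)

lemma monotone_set_image: "monotone_set (f ` H) \<longleftrightarrow> monotone_set H"
  by (simp add: monotone_set_def)

lemma maximal_monotone_image:
  assumes "maximal_monotone G"
  shows "maximal_monotone (f ` G)"
  unfolding maximal_monotone_def
proof (intro conjI notI)
  show "monotone_set (f ` G)"
    using assms by (simp add: maximal_monotone_def monotone_set_image)
  assume "\<exists>H. monotone_set H \<and> f ` G \<subset> H"
  then obtain H where "monotone_set (f ` H)" "G \<subset> f ` H"
    by (metis image_image_eq monotone_set_image image_mono psubset_eq inj_image_eq_iff
        inj_on_inverseI involutive)
  then show False
    using assms by (auto simp: maximal_monotone_def)
qed

lemma Arg_image: "Arg (f ` G) (f y) = f ` Arg G y"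
proof -
  have "f x \<in> Arg (f ` G) (f y) \<longleftrightarrow> f x \<in> f ` Arg G y" for x
    by (simp add: Arg_iff)
  then show ?thesis
    by (metis involutive subsetI subset_antisym)
qed

lemma phi_image: "phi (f ` G) (f y) = phi G y"
  unfolding phi_def by (simp add: image_image)

lemma dom_phi_image: "f y \<in> dom_phi (f ` G) \<longleftrightarrow> y \<in> dom_phi G"
  by (simp add: dom_phi_def phi_image)

lemma dom_Arg_image: "f y \<in> dom_Arg (f ` G) \<longleftrightarrow> y \<in> dom_Arg G"
  by (simp add: dom_Arg_def Arg_image)

end

interpretation swap: cost_symmetry prod.swap
  by unfold_locales (auto simp: cost_def dist_prod_def add.commute open_box_def)

interpretation neg: cost_symmetry uminus
proof unfold_locales
  show "cost (- a) (- b) = cost a b" for a b :: pt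
    by (simp add: cost_def algebra_simps)
  show "- y \<in> open_box (uminus ` G) \<longleftrightarrow> y \<in> open_box G" for y G
    by (auto simp: open_box_def)
qed (simp_all add: dist_minus)

interpretation antiswap: cost_symmetry antiswap
proof unfold_locales
  show "cost (antiswap a) (antiswap b) = cost a b" for a b
    by (simp add: antiswap_def cost_def algebra_simps)
  show "dist (antiswap a) (antiswap b) = dist a b" for a b
    using neg.dist_image[of "prod.swap a" "prod.swap b"]
    by (simp add: antiswap_def dist_prod_def add.commute)
  show "antiswap y \<in> open_box (antiswap ` G) \<longleftrightarrow> y \<in> open_box G" for y G
    by (auto simp: open_box_def antiswap_def)
qed (simp add: antiswap_def)

section \<open>The interior of the domain of \<open>\<phi>\<close>\<close>

context max_monotone
begin

lemma max_monotone_images: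
  "max_monotone (uminus ` G)" "max_monotone (prod.swap ` G)" "max_monotone (antiswap ` G)"
  using neg.maximal_monotone_image swap.maximal_monotone_image antiswap.maximal_monotone_image
    maximal_monotone by (auto intro: max_monotone.intro)

lemma dom_phi_snd_bound:
  assumes "y \<in> dom_phi G" "c < snd y"
  shows "\<exists>z\<in>G. c < snd z"
proof (rule ccontr)
  assume "\<not> ?thesis"
  then have below: "snd z \<le> c" if "z \<in> G" for z
    using that by auto
  define e where "e = snd y - c"
  have e: "0 < e"
    using assms(2) by (simp add: e_def)
  have "\<exists>z\<in>G. cost z y < r" for r
  proof -
    obtain z where z: "z \<in> G" "fst y + (\<bar>r\<bar> + 1) / e < fst z"
      using not_bounded_above[of "fst y + (\<bar>r\<bar> + 1) / e" c] below by force
    then have gap: "(\<bar>r\<bar> + 1) / e < fst z - fst y"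
      by simp
    then have "\<bar>r\<bar> + 1 < (fst z - fst y) * e"
      using e by (simp add: pos_divide_less_eq)
    moreover have "cost z y \<le> (fst z - fst y) * (- e)"
    proof -
      have "0 < fst z - fst y"
        using gap e by (smt (verit) divide_pos_pos)
      then show ?thesis
        unfolding cost_def using below[OF z(1)] by (intro mult_left_mono) (auto simp: e_def)
    qed
    ultimately show ?thesis
      using z(1) by (intro bexI[of _ z]) auto
  qed
  then show False
    using not_in_dom_phi assms(1) by blast
qed

lemma dom_phi_bounds:
  assumes "y \<in> dom_phi G"
  shows "c < snd y \<Longrightarrow> \<exists>z\<in>G. c < snd z"
    and "snd y < c \<Longrightarrow> \<exists>z\<in>G. snd z < c"
    and "c < fst y \<Longrightarrow> \<exists>z\<in>G. c < fst z"
    and "fst y < c \<Longrightarrow> \<exists>z\<in>G. fst z < c"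
proof -
  interpret neg: max_monotone "uminus ` G"
    by (rule max_monotone_images)
  interpret swap: max_monotone "prod.swap ` G"
    by (rule max_monotone_images)
  interpret antiswap: max_monotone "antiswap ` G"
    by (rule max_monotone_images)
  show "c < snd y \<Longrightarrow> \<exists>z\<in>G. c < snd z"
    by (rule dom_phi_snd_bound[OF assms])
  show "\<exists>z\<in>G. snd z < c" if "snd y < c"
  proof -
    have "- y \<in> dom_phi (uminus ` G)"
      using assms by (simp add: neg.dom_phi_image)
    moreover have "- c < snd (- y)"
      using that by simp
    ultimately obtain z where "z \<in> uminus ` G" "- c < snd z"
      by (blast dest: neg.dom_phi_snd_bound)
    then show ?thesis
      by force
  qed
  show "\<exists>z\<in>G. c < fst z" if "c < fst y"
  proof -
    have "prod.swap y \<in> dom_phi (prod.swap ` G)"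
      using assms by (simp add: swap.dom_phi_image)
    moreover have "c < snd (prod.swap y)"
      using that by simp
    ultimately obtain z where "z \<in> prod.swap ` G" "c < snd z"
      by (blast dest: swap.dom_phi_snd_bound)
    then show ?thesis
      by force
  qed
  show "\<exists>z\<in>G. fst z < c" if "fst y < c"
  proof -
    have "antiswap y \<in> dom_phi (antiswap ` G)"
      using assms by (simp add: antiswap.dom_phi_image)
    moreover have "- c < snd (antiswap y)"
      using that by (simp add: antiswap_def)
    ultimately obtain z where "z \<in> antiswap ` G" "- c < snd z"
      by (blast dest: antiswap.dom_phi_snd_bound)
    then show ?thesis
      by (force simp: antiswap_def)
  qed
qed

lemma open_box_iff:
  "y \<in> open_box G \<longleftrightarrow>
     (\<exists>w\<in>G. fst y < fst w \<and> snd y < snd w) \<and> (\<exists>w\<in>G. fst w < fst y \<and> snd w < snd y)"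
proof
  assume "y \<in> open_box G"
  then obtain a b c d where "a \<in> G" "fst y < fst a" "b \<in> G" "fst b < fst y"
    "c \<in> G" "snd y < snd c" "d \<in> G" "snd d < snd y"
    by (auto simp: open_box_def)
  with comparable[of a c] comparable[of b d] show
    "(\<exists>w\<in>G. fst y < fst w \<and> snd y < snd w) \<and> (\<exists>w\<in>G. fst w < fst y \<and> snd w < snd y)"
    by (meson order_le_less_trans order_less_le_trans)
qed (auto simp: open_box_def)

lemma nonpos_cost_le_upper:
  assumes "x \<in> G" "w \<in> G" "fst z < fst w" "snd z < snd w" "cost x z \<le> 0"
  shows "fst x \<le> fst w \<and> snd x \<le> snd w"
proof (rule ccontr)
  assume "\<not> ?thesis"
  then have "fst w \<le> fst x \<and> snd w \<le> snd x"
    using comparable[OF assms(1,2)] by auto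
  then have "0 < cost x z"
    using assms(3,4) by (simp add: cost_def)
  with assms(5) show False
    by simp
qed

lemma nonpos_cost_ge_lower:
  assumes "x \<in> G" "w \<in> G" "fst w < fst z" "snd w < snd z" "cost x z \<le> 0"
  shows "fst w \<le> fst x \<and> snd w \<le> snd x"
proof (rule ccontr)
  assume "\<not> ?thesis"
  then have "fst x \<le> fst w \<and> snd x \<le> snd w"
    using comparable[OF assms(1,2)] by auto
  then have "0 < cost x z"
    using assms(3,4) by (simp add: cost_def mult_neg_neg)
  with assms(5) show False
    by simp
qed

lemma Arg_between:
  assumes w: "w \<in> G" "fst z < fst w" "snd z < snd w"
    and w': "w' \<in> G" "fst w' < fst z" "snd w' < snd z"
  shows "Arg G z \<noteq> {}" and "Arg G z \<subseteq> {fst w'..fst w} \<times> {snd w'..snd w}"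
proof -
  define K where "K = {fst w'..fst w} \<times> {snd w'..snd w}"
  have in_K: "x \<in> K" if "x \<in> G" "cost x z \<le> 0" for x
    using nonpos_cost_le_upper[OF that(1) w] nonpos_cost_ge_lower[OF that(1) w'] that(2)
    by (auto simp: K_def mem_Times_iff)
  then show "Arg G z \<subseteq> {fst w'..fst w} \<times> {snd w'..snd w}"
    using Arg_in Arg_cost_nonpos unfolding K_def by blast
  have "compact (G \<inter> K)"
    unfolding K_def by (intro closed_Int_compact closed compact_Times compact_Icc)
  moreover obtain z0 where z0: "z0 \<in> G" "cost z0 z \<le> 0"
    using exists_cost_nonpos by blast
  moreover have "continuous_on (G \<inter> K) (\<lambda>x. cost x z)"
    unfolding cost_def by (intro continuous_intros)
  ultimately obtain x where x: "x \<in> G \<inter> K" "\<And>u. u \<in> G \<inter> K \<Longrightarrow> cost x z \<le> cost u z"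
    using continuous_attains_inf[of "G \<inter> K" "\<lambda>x. cost x z"] in_K by blast
  have "x \<in> Arg G z"
  proof (rule ArgI)
    fix u assume u: "u \<in> G"
    show "cost x z \<le> cost u z"
    proof (cases "cost u z \<le> 0")
      case True
      then show ?thesis using x u in_K by blast
    next
      case False
      have "z0 \<in> G \<inter> K"
        using z0 in_K by blast
      then show ?thesis
        using x(2) z0(2) False by fastforce
    qed
  qed (use x in blast)
  then show "Arg G z \<noteq> {}"
    by blast
qed

lemma Arg_nonempty_if_open_box:
  assumes "y \<in> open_box G"
  shows "Arg G y \<noteq> {}"
proof -
  obtain w w' where "w \<in> G" "fst y < fst w" "snd y < snd w" "w' \<in> G" "fst w' < fst y" "snd w' < snd y"
    using assms open_box_iff by blast
  then show ?thesis
    by (rule Arg_between(1))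
qed

lemma Arg_bounded_near:
  assumes "y \<in> open_box G"
  shows "\<exists>\<rho>>0. \<exists>R. ball y \<rho> \<subseteq> open_box G \<and> (\<forall>z\<in>ball y \<rho>. Arg G z \<subseteq> cball 0 R)"
proof -
  obtain w w' where w: "w \<in> G" "fst y < fst w" "snd y < snd w"
    and w': "w' \<in> G" "fst w' < fst y" "snd w' < snd y"
    using assms open_box_iff by blast
  define \<rho> where "\<rho> = min (min (fst w - fst y) (snd w - snd y)) (min (fst y - fst w') (snd y - snd w'))"
  define R where "R = \<bar>fst w\<bar> + \<bar>fst w'\<bar> + \<bar>snd w\<bar> + \<bar>snd w'\<bar>"
  have between: "fst z < fst w \<and> snd z < snd w \<and> fst w' < fst z \<and> snd w' < snd z"
    if "z \<in> ball y \<rho>" for z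
    using that abs_fst_le_dist[of y z] abs_snd_le_dist[of y z] by (auto simp: \<rho>_def)
  have "0 < \<rho>"
    using w w' by (simp add: \<rho>_def)
  moreover have "ball y \<rho> \<subseteq> open_box G"
  proof
    fix z assume "z \<in> ball y \<rho>"
    then show "z \<in> open_box G"
      using between[of z] w(1) w'(1) unfolding open_box_def by blast
  qed
  moreover have "Arg G z \<subseteq> cball 0 R" if z: "z \<in> ball y \<rho>" for z
  proof
    fix x assume "x \<in> Arg G z"
    then have "x \<in> {fst w'..fst w} \<times> {snd w'..snd w}"
      using Arg_between(2)[OF w(1) _ _ w'(1)] between[OF z] by blast
    then have "\<bar>fst x\<bar> + \<bar>snd x\<bar> \<le> R"
      unfolding R_def mem_Times_iff by auto
    then show "x \<in> cball 0 R"
      using norm_le_abs_fst_abs_snd[of x] by simp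
  qed
  ultimately show ?thesis
    by blast
qed

lemma open_box_subset_dom_Arg: "open_box G \<subseteq> dom_Arg G"
  using Arg_nonempty_if_open_box by (auto simp: dom_Arg_def)

lemma interior_dom_phi: "interior (dom_phi G) = open_box G"
proof
  show "open_box G \<subseteq> interior (dom_phi G)"
    using open_box_subset_dom_Arg dom_Arg_subset_dom_phi
    by (intro interior_maximal open_open_box) auto
  show "interior (dom_phi G) \<subseteq> open_box G"
  proof
    fix y assume "y \<in> interior (dom_phi G)"
    then obtain e where e: "0 < e" "ball y e \<subseteq> dom_phi G"
      using mem_interior by blast
    have near: "p \<in> dom_phi G" if "\<bar>fst p - fst y\<bar> + \<bar>snd p - snd y\<bar> < e" for p
      using e(2) dist_le_abs_fst_abs_snd[of y p] that by (auto simp: abs_minus_commute)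
    have "(fst y, snd y + e/2) \<in> dom_phi G" "(fst y, snd y - e/2) \<in> dom_phi G"
      "(fst y + e/2, snd y) \<in> dom_phi G" "(fst y - e/2, snd y) \<in> dom_phi G"
      by (rule near; use e in simp)+
    note bounds = this[THEN dom_phi_bounds(1)] this[THEN dom_phi_bounds(2)]
      this[THEN dom_phi_bounds(3)] this[THEN dom_phi_bounds(4)]
    have "\<exists>z\<in>G. snd y < snd z" "\<exists>z\<in>G. snd z < snd y"
      "\<exists>z\<in>G. fst y < fst z" "\<exists>z\<in>G. fst z < fst y"
      using bounds(1)[of "snd y"] bounds(6)[of "snd y"] bounds(11)[of "fst y"] bounds(16)[of "fst y"] e(1)
      by simp_all
    then show "y \<in> open_box G"
      unfolding open_box_def by blast
  qed
qed

end

section \<open>Differentiability of \<open>\<phi>\<close>\<close>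

definition cost_grad :: "pt \<Rightarrow> pt \<Rightarrow> pt" where
  "cost_grad x y = (snd y - snd x, fst y - fst x)"

lemma cost_expansion:
  "cost u z = cost u y + cost_grad u y \<bullet> (z - y) + fst (z - y) * snd (z - y)"
  unfolding cost_def cost_grad_def by (simp add: inner_prod_def algebra_simps)

lemma norm_cost_grad_diff: "norm (cost_grad u y - cost_grad v y) = norm (u - v)"
  by (simp add: cost_grad_def norm_prod_def power2_commute add.commute)

lemma abs_fst_mult_snd_le: "\<bar>fst (h::pt) * snd h\<bar> \<le> norm h * norm h"
  unfolding abs_mult by (intro mult_mono abs_fst_le_norm abs_snd_le_norm) auto

lemma has_derivative_cost: "((\<lambda>z. cost x z) has_derivative (\<lambda>h. cost_grad x y \<bullet> h)) (at y)"
proof -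
  have "((\<lambda>z. (fst x - fst z) * (snd x - snd z)) has_derivative
      (\<lambda>h. (- fst h) * (snd x - snd y) + (fst x - fst y) * (- snd h))) (at y)"
    by (auto intro!: derivative_eq_intros)
  moreover have "(\<lambda>h. (- fst h) * (snd x - snd y) + (fst x - fst y) * (- snd h)) =
      (\<lambda>h. cost_grad x y \<bullet> h)"
    by (auto simp: cost_grad_def inner_prod_def algebra_simps)
  ultimately show ?thesis
    by (simp add: cost_def)
qed

lemma phi_r_increment_bounds:
  assumes x: "x \<in> Arg G y" and xz: "xz \<in> Arg G z"
  shows "(cost_grad xz y - cost_grad x y) \<bullet> (z - y) + fst (z - y) * snd (z - y) \<le>
      phi_r G z - phi_r G y - cost_grad x y \<bullet> (z - y)"
    and "phi_r G z - phi_r G y - cost_grad x y \<bullet> (z - y) \<le> fst (z - y) * snd (z - y)"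
  using Arg_le[OF x Arg_in[OF xz]] Arg_le[OF xz Arg_in[OF x]] cost_expansion[of xz z y] cost_expansion[of x z y]
  by (simp_all add: phi_r_Arg[OF xz] phi_r_Arg[OF x] inner_diff_left)

definition Arg_locally_bounded :: "pt set \<Rightarrow> pt \<Rightarrow> bool" where
  "Arg_locally_bounded G y \<longleftrightarrow> (\<exists>\<rho>>0. \<exists>R. \<forall>z\<in>ball y \<rho> \<inter> open_box G. Arg G z \<subseteq> cball 0 R)"

context max_monotone
begin

lemma Arg_closed_graph:
  assumes "\<And>n. x n \<in> Arg G (z n)" "x \<longlonglongrightarrow> x0" "z \<longlonglongrightarrow> y"
  shows "x0 \<in> Arg G y"
proof (rule ArgI)
  show "x0 \<in> G"
    using closed_sequentially[OF closed _ assms(2)] assms(1) Arg_in by blast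
  fix w assume "w \<in> G"
  have "(\<lambda>n. cost (x n) (z n)) \<longlonglongrightarrow> cost x0 y" "(\<lambda>n. cost w (z n)) \<longlonglongrightarrow> cost w y"
    unfolding cost_def by (intro tendsto_intros assms(2,3))+
  moreover have "cost (x n) (z n) \<le> cost w (z n)" for n
    using assms(1) \<open>w \<in> G\<close> Arg_le by blast
  ultimately show "cost x0 y \<le> cost w y"
    using LIMSEQ_le by blast
qed

lemma Arg_bounded_sequence_limit:
  assumes "\<And>n. x n \<in> Arg G (z n)" "\<forall>n. x n \<in> cball 0 R" "z \<longlonglongrightarrow> y"
  obtains l r where "strict_mono r" "(x \<circ> r) \<longlonglongrightarrow> l" "l \<in> Arg G y"
proof -
  obtain l r where l: "l \<in> cball 0 R" "strict_mono r" "(x \<circ> r) \<longlonglongrightarrow> l"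
    using seq_compactE[OF compact_imp_seq_compact[OF compact_cball] assms(2)] by blast
  have "l \<in> Arg G y"
    by (rule Arg_closed_graph[of "x \<circ> r" "z \<circ> r"])
      (use assms(1) l LIMSEQ_subseq_LIMSEQ[OF assms(3) l(2)] in auto)
  with l(2,3) that show ?thesis
    by blast
qed

lemma Arg_usc:
  assumes bounded: "Arg_locally_bounded G y" and V: "open V" "Arg G y \<subseteq> V"
  shows "\<exists>\<rho>>0. \<forall>z\<in>ball y \<rho> \<inter> open_box G. Arg G z \<subseteq> V"
proof (rule ccontr)
  obtain \<rho>0 R where \<rho>0: "0 < \<rho>0" "\<forall>z\<in>ball y \<rho>0 \<inter> open_box G. Arg G z \<subseteq> cball 0 R"
    using bounded unfolding Arg_locally_bounded_def by blast
  assume not_usc: "\<not> ?thesis"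
  have "\<exists>z x. z \<in> ball y (min \<rho>0 (inverse (Suc n))) \<inter> open_box G \<and> x \<in> Arg G z \<and> x \<notin> V"
    for n
  proof -
    define r where "r = min \<rho>0 (inverse (Suc n))"
    have "0 < r"
      using \<rho>0(1) by (simp add: r_def)
    then have "\<not> (\<forall>z\<in>ball y r \<inter> open_box G. Arg G z \<subseteq> V)"
      using not_usc by blast
    then obtain z x where "z \<in> ball y r \<inter> open_box G" "x \<in> Arg G z" "x \<notin> V"
      by blast
    then show ?thesis
      unfolding r_def by blast
  qed
  then obtain z where
    "\<forall>n. \<exists>x. z n \<in> ball y (min \<rho>0 (inverse (Suc n))) \<inter> open_box G \<and> x \<in> Arg G (z n) \<and> x \<notin> V"
    using choice[of "\<lambda>n z. \<exists>x. z \<in> ball y (min \<rho>0 (inverse (Suc n))) \<inter> open_box G \<and> x \<in> Arg G z \<and> x \<notin> V"]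
    by blast
  then obtain x where
    "\<forall>n. z n \<in> ball y (min \<rho>0 (inverse (Suc n))) \<inter> open_box G \<and> x n \<in> Arg G (z n) \<and> x n \<notin> V"
    by (rule choice[THEN exE])
  then have zx: "\<And>n. z n \<in> ball y (min \<rho>0 (inverse (Suc n))) \<inter> open_box G"
    "\<And>n. x n \<in> Arg G (z n)" "\<And>n. x n \<notin> V"
    by auto
  have "norm (dist (z n) y) \<le> inverse (Suc n)" for n
    using zx(1)[of n] by (simp add: dist_commute)
  then have "(\<lambda>n. dist (z n) y) \<longlonglongrightarrow> 0"
    by (intro Lim_null_comparison[OF always_eventually LIMSEQ_inverse_real_of_nat]) auto
  then have z: "z \<longlonglongrightarrow> y"
    by (rule tendsto_dist_iff[THEN iffD2])
  have "x n \<in> cball 0 R" for n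
  proof -
    have "z n \<in> ball y \<rho>0 \<inter> open_box G"
      using zx(1)[of n] by auto
    then show ?thesis
      using \<rho>0(2) zx(2)[of n] by blast
  qed
  then obtain l r where l: "strict_mono r" "(x \<circ> r) \<longlonglongrightarrow> l" "l \<in> Arg G y"
    using Arg_bounded_sequence_limit[OF zx(2) _ z] by blast
  then have "eventually (\<lambda>n. (x \<circ> r) n \<in> V) sequentially"
    using topological_tendstoD[OF l(2) V(1)] l(3) V(2) by blast
  then show False
    using zx(3) by auto
qed

lemma Arg_locally_bounded_if_open_box:
  assumes "y \<in> open_box G"
  shows "Arg_locally_bounded G y"
  using Arg_bounded_near[OF assms] unfolding Arg_locally_bounded_def by blast

lemma open_Arg_subset:
  assumes "open V"
  shows "open {z \<in> open_box G. Arg G z \<subseteq> V}"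
proof (rule openI)
  fix y assume y: "y \<in> {z \<in> open_box G. Arg G z \<subseteq> V}"
  obtain \<rho>1 where \<rho>1: "0 < \<rho>1" "\<forall>z\<in>ball y \<rho>1 \<inter> open_box G. Arg G z \<subseteq> V"
    using Arg_usc[OF Arg_locally_bounded_if_open_box assms] y by blast
  obtain \<rho>2 where \<rho>2: "0 < \<rho>2" "ball y \<rho>2 \<subseteq> open_box G"
    using y open_open_box open_contains_ball by blast
  have "ball y (min \<rho>1 \<rho>2) \<subseteq> {z \<in> open_box G. Arg G z \<subseteq> V}"
  proof
    fix z assume "z \<in> ball y (min \<rho>1 \<rho>2)"
    then have "z \<in> ball y \<rho>1" "z \<in> ball y \<rho>2"
      by auto
    then show "z \<in> {z \<in> open_box G. Arg G z \<subseteq> V}"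
      using \<rho>1(2) \<rho>2(2) by blast
  qed
  then show "\<exists>e>0. ball y e \<subseteq> {z \<in> open_box G. Arg G z \<subseteq> V}"
    using \<rho>1(1) \<rho>2(1) by (intro exI[of _ "min \<rho>1 \<rho>2"]) auto
qed

lemma phi_has_derivative:
  assumes y: "y \<in> open_box G" and A: "Arg G y = {x}"
  shows "(phi_r G has_derivative (\<lambda>h. cost_grad x y \<bullet> h)) (at y)"
  unfolding has_derivative_at_alt
proof (intro conjI allI impI)
  show "bounded_linear (\<lambda>h. cost_grad x y \<bullet> h)"
    by (rule bounded_linear_inner_right)
  fix e :: real assume e: "0 < e"
  have "y \<in> {z \<in> open_box G. Arg G z \<subseteq> ball x (e/2)}"
    using y A e by simp
  then obtain d0 where d0: "0 < d0" "ball y d0 \<subseteq> {z \<in> open_box G. Arg G z \<subseteq> ball x (e/2)}"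
    using open_Arg_subset[of "ball x (e/2)"] open_contains_ball by blast
  define d where "d = min d0 (e/2)"
  have d: "0 < d" "d \<le> e/2" "ball y d \<subseteq> {z \<in> open_box G. Arg G z \<subseteq> ball x (e/2)}"
    using d0 e by (auto simp: d_def)
  have "\<bar>phi_r G z - phi_r G y - cost_grad x y \<bullet> (z - y)\<bar> \<le> e * norm (z - y)"
    if z: "norm (z - y) < d" for z
  proof -
    define h where "h = z - y"
    have "z \<in> ball y d"
      using z by (simp add: dist_norm norm_minus_commute)
    then have "z \<in> open_box G" and near: "Arg G z \<subseteq> ball x (e/2)"
      using d(3) by auto
    then obtain xz where xz: "xz \<in> Arg G z"
      using Arg_nonempty_if_open_box by blast
    have x: "x \<in> Arg G y"
      using A by auto
    note bounds = phi_r_increment_bounds[OF x xz, folded h_def]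
    have "\<bar>(cost_grad xz y - cost_grad x y) \<bullet> h\<bar> \<le> norm (xz - x) * norm h"
      using Cauchy_Schwarz_ineq2[of "cost_grad xz y - cost_grad x y" h]
      by (simp add: norm_cost_grad_diff)
    also have "\<dots> \<le> (e/2) * norm h"
      using near xz by (intro mult_right_mono) (auto simp: dist_norm norm_minus_commute)
    finally have first_order: "\<bar>(cost_grad xz y - cost_grad x y) \<bullet> h\<bar> \<le> (e/2) * norm h" .
    have "norm h * norm h \<le> (e/2) * norm h"
      using z d(2) by (intro mult_right_mono) (auto simp: h_def)
    then have second_order: "\<bar>fst h * snd h\<bar> \<le> (e/2) * norm h"
      using abs_fst_mult_snd_le[of h] by linarith
    show ?thesis
      using bounds first_order second_order unfolding h_def abs_le_iff by linarith
  qed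
  then show "\<exists>d>0. \<forall>z. norm (z - y) < d \<longrightarrow>
      norm (phi_r G z - phi_r G y - cost_grad x y \<bullet> (z - y)) \<le> e * norm (z - y)"
    using d(1) by auto
qed

lemma phi_derivative_eq:
  assumes y: "y \<in> open_box G" and D: "(phi_r G has_derivative D) (at y)" and x: "x \<in> Arg G y"
  shows "D = (\<lambda>h. cost_grad x y \<bullet> h)"
proof -
  have "((\<lambda>z. cost x z - phi_r G z) has_derivative (\<lambda>h. cost_grad x y \<bullet> h - D h)) (at y)"
    by (intro has_derivative_diff has_derivative_cost D)
  moreover have "eventually (\<lambda>z. cost x y - phi_r G y \<le> cost x z - phi_r G z) (at y)"
  proof -
    have "eventually (\<lambda>z. z \<in> open_box G) (at y)"
      unfolding eventually_at_topological using y open_open_box by blast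
    then show ?thesis
    proof (rule eventually_mono)
      fix z assume "z \<in> open_box G"
      then obtain xz where xz: "xz \<in> Arg G z"
        using Arg_nonempty_if_open_box by blast
      show "cost x y - phi_r G y \<le> cost x z - phi_r G z"
        using phi_r_Arg[OF xz] phi_r_Arg[OF x] Arg_le[OF xz Arg_in[OF x]] by simp
    qed
  qed
  ultimately have "(\<lambda>h. cost_grad x y \<bullet> h - D h) = (\<lambda>h. 0)"
    by (rule has_derivative_local_min)
  then show ?thesis
    by (auto simp: fun_eq_iff)
qed

lemma grad_phi_eq:
  assumes y: "y \<in> open_box G" and "phi_r G differentiable (at y)" and x: "x \<in> Arg G y"
  shows "grad_phi G y = cost_grad x y"
proof -
  obtain D where "(phi_r G has_derivative D) (at y)"
    using assms(2) by (auto simp: differentiable_def)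
  then have D: "(phi_r G has_derivative (\<lambda>h. cost_grad x y \<bullet> h)) (at y)"
    using phi_derivative_eq[OF y _ x] by metis
  show ?thesis
    unfolding grad_phi_def
  proof (rule the_equality)
    fix g assume "(phi_r G has_derivative (\<lambda>h. g \<bullet> h)) (at y)"
    then have "(\<lambda>h. g \<bullet> h) = (\<lambda>h. cost_grad x y \<bullet> h)"
      using has_derivative_unique D by blast
    then have "(g - cost_grad x y) \<bullet> (g - cost_grad x y) = 0"
      by (metis inner_diff_left diff_self)
    then show "g = cost_grad x y"
      by simp
  qed (rule D)
qed

lemma open_box_in_dom_grad:
  assumes "y \<in> open_box G" "Arg G y = {x}"
  shows "y \<in> dom_grad G \<inter> udom_Arg G"
proof -
  have "phi_r G differentiable (at y)"
    using phi_has_derivative[OF assms] by (auto simp: differentiable_def)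
  moreover have "y \<in> dom_phi G"
    using assms(1) open_box_subset_dom_Arg dom_Arg_subset_dom_phi by blast
  ultimately show ?thesis
    using assms by (auto simp: dom_grad_def udom_Arg_def interior_dom_phi)
qed

lemma boundary_in_dom_grad:
  assumes box: "open_box G \<noteq> {}" and y: "y \<in> dom_Arg G" "y \<notin> open_box G"
    and A: "Arg G y = {x}" and bounded: "Arg_locally_bounded G y"
  shows "y \<in> dom_grad G \<inter> udom_Arg G"
proof -
  have y_dom: "y \<in> dom_phi G"
    using y(1) dom_Arg_subset_dom_phi by blast
  have "rel_interior (dom_phi G) = open_box G"
    using box by (simp add: rel_interior_nonempty_interior interior_dom_phi)
  then have frontier: "y \<in> rel_frontier (dom_phi G)"
    using y_dom y(2) closure_subset by (auto simp: rel_frontier_def)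
  have "(\<lambda>n. grad_phi G (Y n)) \<longlonglongrightarrow> cost_grad x y"
    if Y: "\<forall>n. Y n \<in> diff_pts G" "Y \<longlonglongrightarrow> y" for Y
  proof -
    have Y_box: "Y n \<in> open_box G" and Y_diff: "phi_r G differentiable (at (Y n))" for n
      using Y(1) by (auto simp: diff_pts_def interior_dom_phi)
    define xs where "xs n = (SOME w. w \<in> Arg G (Y n))" for n
    have xs: "xs n \<in> Arg G (Y n)" for n
      using Arg_nonempty_if_open_box[OF Y_box[of n]] unfolding xs_def by (simp add: some_in_eq)
    have "xs \<longlonglongrightarrow> x"
    proof (rule tendstoI)
      fix r :: real assume "0 < r"
      then obtain \<rho> where \<rho>: "0 < \<rho>" "\<forall>z\<in>ball y \<rho> \<inter> open_box G. Arg G z \<subseteq> ball x r"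
        using Arg_usc[OF bounded, of "ball x r"] A by auto
      show "eventually (\<lambda>n. dist (xs n) x < r) sequentially"
        using tendstoD[OF Y(2) \<rho>(1)]
      proof eventually_elim
        case (elim n)
        then have "Y n \<in> ball y \<rho> \<inter> open_box G"
          using Y_box[of n] by (simp add: dist_commute)
        then have "xs n \<in> ball x r"
          using \<rho>(2) xs[of n] by blast
        then show ?case
          by (simp add: dist_commute)
      qed
    qed
    then have "(\<lambda>n. cost_grad (xs n) (Y n)) \<longlonglongrightarrow> cost_grad x y"
      unfolding cost_grad_def by (intro tendsto_intros Y(2))
    then show ?thesis
      using grad_phi_eq[OF Y_box Y_diff xs] by simp
  qed
  then show ?thesis
    using y_dom frontier A unfolding dom_grad_def udom_Arg_def by blast
qed

end

section \<open>Points with several minimisers\<close>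

definition Arg_multivalued :: "pt set \<Rightarrow> pt \<Rightarrow> bool" where
  "Arg_multivalued G y \<longleftrightarrow> (\<exists>u v. u \<in> Arg G y \<and> v \<in> Arg G y \<and> u \<noteq> v)"

lemma (in cost_symmetry) Arg_multivalued_image:
  "Arg_multivalued (f ` G) (f y) \<longleftrightarrow> Arg_multivalued G y"
  unfolding Arg_multivalued_def Arg_image by (metis image_iff involutive)

context max_monotone
begin

lemma E_set_subset: "E_set G \<subseteq> dom_Arg G - udom_Arg G"
proof
  fix y assume "y \<in> E_set G"
  then obtain i t where "t \<in> T_i G i" "y \<in> E_i G i t"
    by (auto simp: E_set_def)
  then obtain p q where pq: "p \<in> E_i G i t" "q \<in> E_i G i t" "p \<noteq> q" and y: "y \<in> E_i G i t"
    by (auto simp: T_i_def)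
  have in_Arg: "w \<in> Arg G y" if "w \<in> E_i G i t" for w
  proof -
    have "coord i w = coord i y"
      using that y by (simp add: E_i_def)
    then have "cost w y = 0"
      by (auto simp: coord_def cost_eq_0_iff split: if_splits)
    then show ?thesis
      using that y Arg_of_mem by (auto simp: E_i_def)
  qed
  then have "p \<in> Arg G y" "q \<in> Arg G y"
    using pq by blast+
  then show "y \<in> dom_Arg G - udom_Arg G"
    using pq(3) by (auto simp: dom_Arg_def udom_Arg_def)
qed

lemma mem_E_set_if_Arg:
  assumes "y \<in> G" "u \<in> Arg G y" "u \<noteq> y"
  shows "y \<in> E_set G"
proof -
  have "u \<in> G" "cost u y = 0"
    using assms Arg_of_mem by auto
  then consider "fst u = fst y" | "snd u = snd y"
    by (auto simp: cost_eq_0_iff)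
  then show ?thesis
  proof cases
    case 1
    then have "y \<in> E_i G 1 (fst y)" "u \<in> E_i G 1 (fst y)"
      using assms(1) \<open>u \<in> G\<close> by (simp_all add: E_i_def coord_def)
    then have "fst y \<in> T_i G 1"
      unfolding T_i_def using assms(3) by blast
    then show ?thesis
      using assms(1) by (auto simp: E_set_def E_i_def coord_def)
  next
    case 2
    then have "y \<in> E_i G 2 (snd y)" "u \<in> E_i G 2 (snd y)"
      using assms(1) \<open>u \<in> G\<close> by (simp_all add: E_i_def coord_def)
    then have "snd y \<in> T_i G 2"
      unfolding T_i_def using assms(3) by blast
    then show ?thesis
      using assms(1) by (auto simp: E_set_def E_i_def coord_def)
  qed
qed

lemma Arg_strictly_ordered:
  assumes "y \<notin> G" "u \<in> Arg G y" "v \<in> Arg G y" "u \<noteq> v"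
  shows "(fst u < fst v \<and> snd u < snd v) \<or> (fst v < fst u \<and> snd v < snd u)"
proof -
  have "cost u y < 0"
    using exists_cost_neg[OF assms(1)] Arg_le[OF assms(2)] by fastforce
  then have "fst u \<noteq> fst y" "snd u \<noteq> snd y"
    by (auto simp: cost_def)
  moreover have "cost u y = cost v y"
    using Arg_cost_eq assms(2,3) by blast
  ultimately have "fst u \<noteq> fst v" "snd u \<noteq> snd v"
    using assms(4) by (auto simp: cost_def prod_eq_iff)
  then show ?thesis
    using comparable[OF Arg_in[OF assms(2)] Arg_in[OF assms(3)]] by auto
qed

lemma countable_horizontal_multivalued:
  "countable {y. snd y = c \<and> y \<notin> G \<and> Arg_multivalued G y}"
proof -
  define S where "S = {y. snd y = c \<and> y \<notin> G \<and> Arg_multivalued G y}"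
  define between where
    "between y r \<longleftrightarrow> r \<in> \<rat> \<and> (\<exists>u\<in>Arg G y. \<exists>v\<in>Arg G y. snd u < r \<and> r < snd v)" for y r
  have "\<exists>r. between y r" if y: "y \<in> S" for y
  proof -
    obtain u v where "u \<in> Arg G y" "v \<in> Arg G y" "u \<noteq> v" "y \<notin> G"
      using y unfolding S_def Arg_multivalued_def by blast
    then obtain a b where "a \<in> Arg G y" "b \<in> Arg G y" "snd a < snd b"
      using Arg_strictly_ordered by blast
    moreover obtain r where "r \<in> \<rat>" "snd a < r" "r < snd b"
      using Rats_dense_in_real[OF \<open>snd a < snd b\<close>] by blast
    ultimately show ?thesis
      unfolding between_def by blast
  qed
  then have rat: "between y (SOME r. between y r)" if "y \<in> S" for y
    using that by (meson someI_ex)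
  have increasing: "(SOME r. between y r) < (SOME r. between y' r)"
    if y: "y \<in> S" and y': "y' \<in> S" and lt: "fst y < fst y'" for y y'
  proof -
    obtain v where v: "v \<in> Arg G y" "(SOME r. between y r) < snd v"
      using rat[OF y] unfolding between_def by blast
    obtain u' where u': "u' \<in> Arg G y'" "snd u' < (SOME r. between y' r)"
      using rat[OF y'] unfolding between_def by blast
    have "snd y = snd y'"
      using y y' by (simp add: S_def)
    then have "0 \<le> (snd u' - snd v) * (fst y' - fst y)"
      using Arg_monotone[OF v(1) u'(1)] by simp
    then have "snd v \<le> snd u'"
      using lt by (simp add: zero_le_mult_iff)
    then show ?thesis
      using v(2) u'(2) by linarith
  qed
  have "inj_on (\<lambda>y. SOME r. between y r) S"
  proof (rule inj_onI)
    fix y y' assume "y \<in> S" "y' \<in> S" "(SOME r. between y r) = (SOME r. between y' r)"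
    then have "fst y = fst y'" "snd y = snd y'"
      using increasing[of y y'] increasing[of y' y] by (force simp: S_def)+
    then show "y = y'"
      by (simp add: prod_eq_iff)
  qed
  moreover have "(\<lambda>y. SOME r. between y r) ` S \<subseteq> \<rat>"
    using rat by (auto simp: between_def)
  ultimately show ?thesis
    unfolding S_def[symmetric]
    by (metis countable_rat countable_image_inj_on countable_subset)
qed

lemma countable_top_multivalued:
  "countable {y \<in> dom_phi G. (\<forall>z\<in>G. snd z \<le> snd y) \<and> y \<notin> G \<and> Arg_multivalued G y}"
    (is "countable ?S")
proof (cases "?S = {}")
  case False
  then obtain y0 where y0: "y0 \<in> ?S"
    by blast
  have "snd y = snd y0" if "y \<in> ?S" for y
  proof -
    have "\<not> snd y0 < snd y"
      using dom_phi_bounds(1)[of y "snd y0"] that y0 by fastforce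
    moreover have "\<not> snd y < snd y0"
      using dom_phi_bounds(1)[of y0 "snd y"] that y0 by fastforce
    ultimately show ?thesis
      by linarith
  qed
  then have "?S \<subseteq> {y. snd y = snd y0 \<and> y \<notin> G \<and> Arg_multivalued G y}"
    by blast
  then show ?thesis
    using countable_horizontal_multivalued countable_subset by blast
next
  case True
  then show ?thesis
    by (metis countable_empty)
qed

end

context max_monotone
begin

lemma countable_off_box_multivalued:
  "countable {y \<in> dom_phi G. y \<notin> open_box G \<and> y \<notin> G \<and> Arg_multivalued G y}"
proof -
  define T where "T H = {y \<in> dom_phi H. (\<forall>z\<in>H. snd z \<le> snd y) \<and> y \<notin> H \<and> Arg_multivalued H y}"
    for H
  interpret neg: max_monotone "uminus ` G"
    by (rule max_monotone_images)
  interpret swap: max_monotone "prod.swap ` G"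
    by (rule max_monotone_images)
  interpret antiswap: max_monotone "antiswap ` G"
    by (rule max_monotone_images)
  have "{y \<in> dom_phi G. y \<notin> open_box G \<and> y \<notin> G \<and> Arg_multivalued G y} \<subseteq>
      T G \<union> uminus -` T (uminus ` G) \<union> prod.swap -` T (prod.swap ` G) \<union> antiswap -` T (antiswap ` G)"
    unfolding T_def open_box_def
    by (auto simp: neg.dom_phi_image swap.dom_phi_image antiswap.dom_phi_image
        neg.Arg_multivalued_image swap.Arg_multivalued_image antiswap.Arg_multivalued_image
        Ball_image_comp not_less)
  moreover have "countable (T G)" "countable (T (uminus ` G))" "countable (T (prod.swap ` G))"
    "countable (T (antiswap ` G))"
    unfolding T_def by (rule countable_top_multivalued neg.countable_top_multivalued
        swap.countable_top_multivalued antiswap.countable_top_multivalued)+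
  ultimately show ?thesis
    by (meson countable_Un neg.countable_vimage swap.countable_vimage antiswap.countable_vimage
        countable_subset)
qed

end

section \<open>Escaping minimisers\<close>

text \<open>Only escape to the right is defined; the other three directions are reached through
  the coordinate symmetries.\<close>

definition escapes_right :: "pt set \<Rightarrow> pt \<Rightarrow> bool" where
  "escapes_right G y \<longleftrightarrow> (\<forall>\<rho>>0. \<forall>M. \<exists>z\<in>ball y \<rho> \<inter> open_box G. \<exists>x\<in>Arg G z. M < fst x)"

lemma not_escapes_right_iff:
  "\<not> escapes_right G y \<longleftrightarrow>
    (\<exists>\<rho>>0. \<exists>M. \<forall>z\<in>ball y \<rho> \<inter> open_box G. \<forall>x\<in>Arg G z. fst x \<le> M)"
  by (simp add: escapes_right_def not_less)

lemma (in cost_symmetry) bounded_if_not_escapes_right_image: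
  assumes "\<not> escapes_right (f ` G) (f y)"
  shows "\<exists>\<rho>>0. \<exists>M. \<forall>z\<in>ball y \<rho> \<inter> open_box G. \<forall>x\<in>Arg G z. fst (f x) \<le> M"
proof -
  obtain \<rho> M where "0 < \<rho>"
    and bound: "\<forall>z\<in>ball (f y) \<rho> \<inter> open_box (f ` G). \<forall>x\<in>Arg (f ` G) z. fst x \<le> M"
    using assms unfolding not_escapes_right_iff by blast
  have "fst (f x) \<le> M" if "z \<in> ball y \<rho> \<inter> open_box G" "x \<in> Arg G z" for z x
  proof -
    have "f z \<in> ball (f y) \<rho> \<inter> open_box (f ` G)" "f x \<in> Arg (f ` G) (f z)"
      using that by (simp_all add: open_box_image Arg_image)
    then show ?thesis
      using bound by blast
  qed
  with \<open>0 < \<rho>\<close> show ?thesis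
    by blast
qed

lemma Arg_locally_bounded_if_no_escape:
  assumes no_escape: "\<not> escapes_right G y" "\<not> escapes_right (uminus ` G) (- y)"
    "\<not> escapes_right (prod.swap ` G) (prod.swap y)" "\<not> escapes_right (antiswap ` G) (antiswap y)"
  shows "Arg_locally_bounded G y"
proof -
  obtain \<rho>1 M1 where 1: "0 < \<rho>1" "\<forall>z\<in>ball y \<rho>1 \<inter> open_box G. \<forall>x\<in>Arg G z. fst x \<le> M1"
    using no_escape(1) unfolding not_escapes_right_iff by blast
  obtain \<rho>2 M2 where 2: "0 < \<rho>2" "\<forall>z\<in>ball y \<rho>2 \<inter> open_box G. \<forall>x\<in>Arg G z. fst (- x) \<le> M2"
    using neg.bounded_if_not_escapes_right_image[OF no_escape(2)] by blast
  obtain \<rho>3 M3 where 3: "0 < \<rho>3"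
    "\<forall>z\<in>ball y \<rho>3 \<inter> open_box G. \<forall>x\<in>Arg G z. fst (prod.swap x) \<le> M3"
    using swap.bounded_if_not_escapes_right_image[OF no_escape(3)] by blast
  obtain \<rho>4 M4 where 4: "0 < \<rho>4"
    "\<forall>z\<in>ball y \<rho>4 \<inter> open_box G. \<forall>x\<in>Arg G z. fst (antiswap x) \<le> M4"
    using antiswap.bounded_if_not_escapes_right_image[OF no_escape(4)] by blast
  define \<rho> where "\<rho> = min (min \<rho>1 \<rho>2) (min \<rho>3 \<rho>4)"
  have "norm x \<le> \<bar>M1\<bar> + \<bar>M2\<bar> + \<bar>M3\<bar> + \<bar>M4\<bar>" if "z \<in> ball y \<rho> \<inter> open_box G" "x \<in> Arg G z" for z x
  proof -
    have "z \<in> ball y \<rho>1 \<inter> open_box G" "z \<in> ball y \<rho>2 \<inter> open_box G"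
      "z \<in> ball y \<rho>3 \<inter> open_box G" "z \<in> ball y \<rho>4 \<inter> open_box G"
      using that(1) by (auto simp: \<rho>_def)
    then have "fst x \<le> M1" "- fst x \<le> M2" "snd x \<le> M3" "- snd x \<le> M4"
      using 1(2) 2(2) 3(2) 4(2) that(2) by fastforce+
    then show ?thesis
      using norm_le_abs_fst_abs_snd[of x] by linarith
  qed
  moreover have "0 < \<rho>"
    using 1(1) 2(1) 3(1) 4(1) by (simp add: \<rho>_def)
  ultimately show ?thesis
    unfolding Arg_locally_bounded_def by (meson mem_cball_0 subsetI)
qed

context max_monotone
begin

lemma escapes_rightD:
  assumes "escapes_right G y" "0 < \<rho>"
  obtains z x where "z \<in> ball y \<rho> \<inter> open_box G" "x \<in> Arg G z" "M < fst x" "snd x \<le> snd z"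
proof -
  obtain z x where zx: "z \<in> ball y (min \<rho> 1) \<inter> open_box G" "x \<in> Arg G z" "max M (fst y + 1) < fst x"
    using assms unfolding escapes_right_def by (meson min_less_iff_conj zero_less_one)
  then have "fst z < fst x"
    using abs_fst_le_dist[of y z] by auto
  then have "snd x \<le> snd z"
    using Arg_cost_nonpos[OF zx(2)] by (auto simp: cost_def mult_le_0_iff)
  with zx show ?thesis
    by (intro that[of z x]) auto
qed

lemma escapes_right_above:
  assumes y: "escapes_right G y" and w: "w \<in> G"
  shows "snd w < snd y"
proof -
  have below: "snd w' \<le> snd y" if "w' \<in> G" for w'
  proof (rule ccontr)
    assume "\<not> ?thesis"
    then obtain z x where zx: "z \<in> ball y (snd w' - snd y) \<inter> open_box G" "x \<in> Arg G z"
      "fst w' < fst x" "snd x \<le> snd z"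
      using escapes_rightD[OF y] by (metis diff_gt_0_iff_gt not_le)
    have "snd w' \<le> snd x"
      using comparable[OF Arg_in[OF zx(2)] that] zx(3) by auto
    moreover have "snd z < snd w'"
      using zx(1) abs_snd_le_dist[of y z] by auto
    ultimately show False
      using zx(4) by linarith
  qed
  obtain z x where zx: "z \<in> ball y 1 \<inter> open_box G" "x \<in> Arg G z" "fst w < fst x" "snd x \<le> snd z"
    using escapes_rightD[OF y zero_less_one] by metis
  obtain w' where "w' \<in> G" "snd z < snd w'"
    using zx(1) by (auto simp: open_box_def)
  moreover have "snd w \<le> snd x"
    using comparable[OF Arg_in[OF zx(2)] w] zx(3) by auto
  ultimately show ?thesis
    using below zx(4) by fastforce
qed

text \<open>A far-right minimiser \<open>x\<close> of a point \<open>z\<close> near \<open>y\<close> lies almost on the height of \<open>y\<close>, so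
  \<open>cost x y'\<close> is close to \<open>cost x z \<le> \<phi> z \<approx> \<phi> y\<close>.\<close>
lemma escapes_right_phi_le:
  assumes y: "escapes_right G y" and line: "snd y' = snd y"
    and x0: "x0 \<in> Arg G y" and x0': "x0' \<in> Arg G y'"
  shows "cost x0' y' \<le> cost x0 y"
proof (rule field_le_epsilon)
  fix e :: real assume e: "0 < e"
  define D where "D = \<bar>fst y' - fst y\<bar> + 1"
  define \<eta> where "\<eta> = e / (2 * D)"
  have "0 < D"
    by (simp add: D_def add_nonneg_pos)
  then have "0 < \<eta>" "D * \<eta> = e/2"
    using e by (simp_all add: \<eta>_def)
  have "y \<in> dom_phi G"
    using x0 dom_Arg_subset_dom_phi by (auto simp: dom_Arg_def)
  then obtain w where w: "w \<in> G" "snd y - \<eta> < snd w"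
    using dom_phi_bounds(1)[of y "snd y - \<eta>"] \<open>0 < \<eta>\<close> by auto
  have "continuous (at y) (\<lambda>z. cost x0 z)"
    using has_derivative_continuous[OF has_derivative_cost] .
  then obtain \<rho> where \<rho>: "0 < \<rho>" "\<forall>z. dist z y < \<rho> \<longrightarrow> dist (cost x0 z) (cost x0 y) < e/2"
    using e unfolding continuous_at_eps_delta by (meson half_gt_zero)
  have "0 < min \<rho> 1"
    using \<rho>(1) by simp
  then obtain z x where zx: "z \<in> ball y (min \<rho> 1) \<inter> open_box G" "x \<in> Arg G z"
    "max (fst w) (fst y + 1) < fst x" "snd x \<le> snd z"
    by (rule escapes_rightD[OF y])
  have fz: "\<bar>fst z - fst y\<bar> < 1" "dist z y < \<rho>"
    using zx(1) abs_fst_le_dist[of z y] by (auto simp: dist_commute)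
  obtain w' where "w' \<in> G" "snd z < snd w'"
    using zx(1) by (auto simp: open_box_def)
  then have "snd z < snd y"
    using escapes_right_above[OF y] by fastforce
  have "snd w \<le> snd x"
    using comparable[OF Arg_in[OF zx(2)] w(1)] zx(3) by auto
  have "cost x y' = (fst x - fst z) * (snd x - snd y) + (fst z - fst y') * (snd x - snd y)"
    unfolding cost_def using line by (simp add: algebra_simps)
  also have "(fst x - fst z) * (snd x - snd y) \<le> cost x z"
    unfolding cost_def using zx(3) fz(1) \<open>snd z < snd y\<close> by (intro mult_left_mono) auto
  also have "(fst z - fst y') * (snd x - snd y) \<le> D * \<eta>"
  proof -
    have "\<bar>fst z - fst y'\<bar> \<le> D" "\<bar>snd x - snd y\<bar> \<le> \<eta>"
      using fz(1) w(2) \<open>snd w \<le> snd x\<close> zx(4) \<open>snd z < snd y\<close> by (auto simp: D_def)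
    then have "\<bar>(fst z - fst y') * (snd x - snd y)\<bar> \<le> D * \<eta>"
      unfolding abs_mult by (intro mult_mono) auto
    then show ?thesis
      by linarith
  qed
  also have "cost x z \<le> cost x0 z"
    using Arg_le[OF zx(2) Arg_in[OF x0]] .
  also have "cost x0 z < cost x0 y + e/2"
  proof -
    have "dist (cost x0 z) (cost x0 y) < e/2"
      using \<rho>(2) fz(2) by blast
    then show ?thesis
      unfolding dist_real_def by linarith
  qed
  finally show "cost x0' y' \<le> cost x0 y + e"
    using Arg_le[OF x0' Arg_in[OF zx(2)]] \<open>D * \<eta> = e/2\<close> by linarith
qed

lemma dom_phi_below_escape:
  assumes "escapes_right G y" "y' \<in> dom_phi G"
  shows "snd y' \<le> snd y"
proof (rule ccontr)
  assume "\<not> ?thesis"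
  then obtain z where "z \<in> G" "snd y < snd z"
    using dom_phi_bounds(1)[OF assms(2), of "snd y"] by auto
  then show False
    using escapes_right_above[OF assms(1)] by fastforce
qed

lemma escapes_right_unique:
  assumes y: "y \<in> dom_Arg G" "escapes_right G y" and y': "y' \<in> dom_Arg G" "escapes_right G y'"
  shows "y = y'"
proof -
  have height: "snd y' = snd y"
    using dom_phi_below_escape[OF y(2)] dom_phi_below_escape[OF y'(2)] y(1) y'(1) dom_Arg_subset_dom_phi
    by (meson antisym subsetD)
  have not_left: "\<not> fst a < fst b"
    if a: "a \<in> dom_Arg G" "escapes_right G a" and b: "b \<in> dom_Arg G" and height: "snd b = snd a" for a b
  proof
    assume "fst a < fst b"
    obtain xa xb where xa: "xa \<in> Arg G a" and xb: "xb \<in> Arg G b"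
      using a(1) b by (auto simp: dom_Arg_def)
    have "cost xb a - cost xb b = (fst b - fst a) * (snd xb - snd a)"
      unfolding cost_def using height by (simp add: algebra_simps)
    moreover have "(fst b - fst a) * (snd xb - snd a) < 0"
      using \<open>fst a < fst b\<close> escapes_right_above[OF a(2) Arg_in[OF xb]] by (simp add: mult_pos_neg)
    ultimately show False
      using escapes_right_phi_le[OF a(2) height xa xb] Arg_le[OF xa Arg_in[OF xb]] by linarith
  qed
  have "fst y = fst y'"
    using not_left[OF y y'(1) height] not_left[OF y' y(1) height[symmetric]] by linarith
  then show ?thesis
    using height by (simp add: prod_eq_iff)
qed

lemma countable_escapes_right: "countable {y \<in> dom_Arg G. escapes_right G y}"
proof (cases "{y \<in> dom_Arg G. escapes_right G y} = {}")
  case False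
  then obtain y0 where "y0 \<in> dom_Arg G" "escapes_right G y0"
    by blast
  then have "{y \<in> dom_Arg G. escapes_right G y} \<subseteq> {y0}"
    using escapes_right_unique by blast
  moreover have "countable {y0}"
    by simp
  ultimately show ?thesis
    by (rule countable_subset)
qed (metis countable_empty)

lemma countable_not_locally_bounded: "countable {y \<in> dom_Arg G. \<not> Arg_locally_bounded G y}"
proof -
  define T where "T H = {y \<in> dom_Arg H. escapes_right H y}" for H
  interpret neg: max_monotone "uminus ` G"
    by (rule max_monotone_images)
  interpret swap: max_monotone "prod.swap ` G"
    by (rule max_monotone_images)
  interpret antiswap: max_monotone "antiswap ` G"
    by (rule max_monotone_images)
  have "{y \<in> dom_Arg G. \<not> Arg_locally_bounded G y} \<subseteq>
      T G \<union> uminus -` T (uminus ` G) \<union> prod.swap -` T (prod.swap ` G) \<union> antiswap -` T (antiswap ` G)"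
    using Arg_locally_bounded_if_no_escape unfolding T_def
    by (auto simp: neg.dom_Arg_image swap.dom_Arg_image antiswap.dom_Arg_image)
  moreover have "countable (T G)" "countable (T (uminus ` G))" "countable (T (prod.swap ` G))"
    "countable (T (antiswap ` G))"
    unfolding T_def by (rule countable_escapes_right neg.countable_escapes_right
        swap.countable_escapes_right antiswap.countable_escapes_right)+
  ultimately show ?thesis
    by (meson countable_Un neg.countable_vimage swap.countable_vimage antiswap.countable_vimage
        countable_subset)
qed

end

section \<open>Points with three minimisers\<close>

lemma convex_hull_monotone:
  fixes T :: "'a::real_inner \<Rightarrow> 'a set"
  assumes mono: "\<And>p p'. p \<in> T y \<Longrightarrow> p' \<in> T y' \<Longrightarrow> 0 \<le> (p - p') \<bullet> (y - y')"
    and "p \<in> convex hull T y" "p' \<in> convex hull T y'"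
  shows "0 \<le> (p - p') \<bullet> (y - y')"
proof -
  define d where "d = y - y'"
  have hull_y: "convex hull T y \<subseteq> {q. p' \<bullet> d \<le> d \<bullet> q}" if p': "p' \<in> T y'" for p'
  proof (rule hull_minimal)
    show "T y \<subseteq> {q. p' \<bullet> d \<le> d \<bullet> q}"
    proof
      fix q assume "q \<in> T y"
      then have "0 \<le> (q - p') \<bullet> d"
        using mono p' by (simp add: d_def)
      then show "q \<in> {q. p' \<bullet> d \<le> d \<bullet> q}"
        using inner_commute[of q d] by (simp add: inner_diff_left)
    qed
  qed (rule convex_halfspace_ge)
  have "convex hull T y' \<subseteq> {q. d \<bullet> q \<le> p \<bullet> d}"
  proof (rule hull_minimal)
    show "T y' \<subseteq> {q. d \<bullet> q \<le> p \<bullet> d}"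
    proof
      fix q assume "q \<in> T y'"
      have "p \<in> {r. q \<bullet> d \<le> d \<bullet> r}"
        by (rule subsetD[OF hull_y[OF \<open>q \<in> T y'\<close>] assms(2)])
      then show "q \<in> {q. d \<bullet> q \<le> p \<bullet> d}"
        using inner_commute[of q d] inner_commute[of p d] by simp
    qed
  qed (rule convex_halfspace_le)
  then have "p' \<in> {q. d \<bullet> q \<le> p \<bullet> d}"
    by (rule subsetD) (rule assms(3))
  then have "p' \<bullet> d \<le> p \<bullet> d"
    using inner_commute[of p' d] by simp
  then show ?thesis
    by (simp add: d_def inner_diff_left)
qed

lemma countable_convex_hull_interior_monotone:
  fixes T :: "'a::euclidean_space \<Rightarrow> 'a set"
  assumes mono: "\<And>y y' p p'. p \<in> T y \<Longrightarrow> p' \<in> T y' \<Longrightarrow> 0 \<le> (p - p') \<bullet> (y - y')"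
  shows "countable {y. interior (convex hull T y) \<noteq> {}}"
proof -
  define S where "S = {y. interior (convex hull T y) \<noteq> {}}"
  have disjoint: "interior (convex hull T y) \<inter> interior (convex hull T y') = {}" if "y \<noteq> y'" for y y'
  proof (rule ccontr)
    define d where "d = y - y'"
    assume "interior (convex hull T y) \<inter> interior (convex hull T y') \<noteq> {}"
    then obtain q where q: "q \<in> interior (convex hull T y)" "q \<in> convex hull T y'"
      using interior_subset by blast
    then obtain r where r: "0 < r" "ball q r \<subseteq> convex hull T y"
      using open_contains_ball interior_subset by (metis open_interior subset_trans)
    define t where "t = r / (2 * (norm d + 1))"
    have pos: "0 < 2 * (norm d + 1)"
      by (simp add: add_nonneg_pos)
    then have "0 < t" "t * (2 * (norm d + 1)) = r"
      using r(1) by (simp_all add: t_def)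
    moreover have "t * norm d < t * (2 * (norm d + 1))"
    proof (rule mult_strict_left_mono)
      show "norm d < 2 * (norm d + 1)"
        by (smt (verit) norm_ge_zero)
    qed (fact \<open>0 < t\<close>)
    ultimately have "0 < t" "t * norm d < r"
      by simp_all
    then have "q - t *\<^sub>R d \<in> convex hull T y"
      using r(2) by (auto simp: dist_norm)
    then have "0 \<le> ((q - t *\<^sub>R d) - q) \<bullet> d"
      unfolding d_def using convex_hull_monotone[where T=T and y=y and y'=y', OF mono _ q(2)] by blast
    moreover have "0 < t * (d \<bullet> d)"
      using \<open>0 < t\<close> that by (simp add: d_def)
    ultimately show False
      by (simp add: inner_diff_left)
  qed
  have "pairwise disjnt ((\<lambda>y. interior (convex hull T y)) ` S)"
    by (rule pairwise_imageI) (use disjoint in \<open>auto simp: disjnt_def\<close>)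
  then have "countable ((\<lambda>y. interior (convex hull T y)) ` S)"
    by (intro countable_disjoint_open_subsets) auto
  moreover have "inj_on (\<lambda>y. interior (convex hull T y)) S"
    using disjoint unfolding S_def by (force intro: inj_onI)
  ultimately show ?thesis
    unfolding S_def[symmetric] using countable_image_inj_on by blast
qed

context max_monotone
begin

lemma open_segment_ordered_minimisers_disjoint:
  assumes L: "L \<in> Arg G y" and U: "U \<in> Arg G y" and "fst L < fst U" "snd L < snd U"
  shows "open_segment L U \<inter> G = {}"
proof -
  define d1 where "d1 = fst U - fst L"
  define d2 where "d2 = snd U - snd L"
  define a1 where "a1 = fst L - fst y"
  define a2 where "a2 = snd L - snd y"
  have "(1 - v) *\<^sub>R L + v *\<^sub>R U \<notin> G" if v: "0 < v" "v < 1" for v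
  proof
    assume "(1 - v) *\<^sub>R L + v *\<^sub>R U \<in> G"
    moreover have "cost ((1 - v) *\<^sub>R L + v *\<^sub>R U) y = (a1 + v * d1) * (a2 + v * d2)"
      by (simp add: cost_def a1_def a2_def d1_def d2_def algebra_simps)
    ultimately have "cost L y \<le> (a1 + v * d1) * (a2 + v * d2)"
      using Arg_le[OF L] by metis
    moreover have "(a1 + v * d1) * (a2 + v * d2) = cost L y - v * (1 - v) * (d1 * d2)"
    proof -
      have cost_L: "cost L y = a1 * a2"
        by (simp add: cost_def a1_def a2_def)
      moreover have "cost U y = (a1 + d1) * (a2 + d2)"
        by (simp add: cost_def a1_def a2_def d1_def d2_def)
      ultimately have k: "a1 * d2 + a2 * d1 = - (d1 * d2)"
        using Arg_cost_eq[OF L U] by (simp add: algebra_simps)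
      have "(a1 + v * d1) * (a2 + v * d2) = a1 * a2 + v * (a1 * d2 + a2 * d1) + v * v * (d1 * d2)"
        by (simp add: algebra_simps)
      also have "\<dots> = cost L y - v * (1 - v) * (d1 * d2)"
        unfolding k cost_L by (simp add: algebra_simps)
      finally show ?thesis .
    qed
    moreover have "0 < v * (1 - v) * (d1 * d2)"
      using assms(3,4) v by (simp add: d1_def d2_def)
    ultimately show False
      by linarith
  qed
  then show ?thesis
    by (auto simp: in_segment(2))
qed

lemma open_segment_minimisers_disjoint:
  assumes "y \<notin> G" "u \<in> Arg G y" "v \<in> Arg G y" "u \<noteq> v"
  shows "open_segment u v \<inter> G = {}"
proof -
  consider "fst u < fst v" "snd u < snd v" | "fst v < fst u" "snd v < snd u"
    using Arg_strictly_ordered[OF assms] by blast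
  then show ?thesis
  proof cases
    case 1
    then show ?thesis
      by (rule open_segment_ordered_minimisers_disjoint[OF assms(2,3)])
  next
    case 2
    then show ?thesis
      using open_segment_ordered_minimisers_disjoint[OF assms(3,2)] by (simp add: open_segment_commute)
  qed
qed

lemma interior_convex_hull_Arg_nonempty:
  assumes "y \<notin> G" "u \<in> Arg G y" "v \<in> Arg G y" "w \<in> Arg G y" "u \<noteq> v" "v \<noteq> w" "u \<noteq> w"
  shows "interior (convex hull Arg G y) \<noteq> {}"
proof -
  have "\<not> collinear {u, v, w}"
  proof
    assume "collinear {u, v, w}"
    then have "u \<in> open_segment v w \<or> v \<in> open_segment w u \<or> w \<in> open_segment u v"
      using assms(5-7) by (auto simp: collinear_between_cases between_mem_segment open_segment_def)
    moreover have "u \<in> G" "v \<in> G" "w \<in> G"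
      using assms(2-4) by (auto intro: Arg_in)
    ultimately show False
      using open_segment_minimisers_disjoint[OF assms(1)] assms(2-7) by blast
  qed
  then have "\<not> affine_dependent {u, v, w}"
    by (simp add: collinear_3_eq_affine_dependent)
  moreover have "card {u, v, w} = Suc DIM(pt)"
    using assms(5-7) by simp
  ultimately have "interior (convex hull {u, v, w}) \<noteq> {}"
    using interior_convex_hull_eq_empty by blast
  moreover have "interior (convex hull {u, v, w}) \<subseteq> interior (convex hull Arg G y)"
    using assms(2-4) by (intro interior_mono hull_mono) auto
  ultimately show ?thesis
    by blast
qed

lemma countable_three_minimisers:
  "countable {y. y \<notin> G \<and> (\<exists>u v w. u \<in> Arg G y \<and> v \<in> Arg G y \<and> w \<in> Arg G y \<and>
      u \<noteq> v \<and> v \<noteq> w \<and> u \<noteq> w)}"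
proof -
  have "0 \<le> (p - p') \<bullet> (y - y')" if "p \<in> Arg G (prod.swap y)" "p' \<in> Arg G (prod.swap y')" for y y' p p'
    using Arg_monotone[OF that] by (simp add: inner_prod_def algebra_simps)
  then have "countable {y. interior (convex hull Arg G (prod.swap y)) \<noteq> {}}"
    by (rule countable_convex_hull_interior_monotone)
  then have "countable (prod.swap -` {y. interior (convex hull Arg G (prod.swap y)) \<noteq> {}})"
    by (rule swap.countable_vimage)
  then have "countable {y. interior (convex hull Arg G y) \<noteq> {}}"
    by (simp add: vimage_def)
  moreover have "{y. y \<notin> G \<and> (\<exists>u v w. u \<in> Arg G y \<and> v \<in> Arg G y \<and> w \<in> Arg G y \<and>
      u \<noteq> v \<and> v \<noteq> w \<and> u \<noteq> w)} \<subseteq> {y. interior (convex hull Arg G y) \<noteq> {}}"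
  proof
    fix y assume "y \<in> {y. y \<notin> G \<and> (\<exists>u v w. u \<in> Arg G y \<and> v \<in> Arg G y \<and> w \<in> Arg G y \<and>
      u \<noteq> v \<and> v \<noteq> w \<and> u \<noteq> w)}"
    then obtain u v w where "y \<notin> G" "u \<in> Arg G y" "v \<in> Arg G y" "w \<in> Arg G y"
      "u \<noteq> v" "v \<noteq> w" "u \<noteq> w"
      by blast
    then show "y \<in> {y. interior (convex hull Arg G y) \<noteq> {}}"
      using interior_convex_hull_Arg_nonempty by simp
  qed
  ultimately show ?thesis
    by (rule countable_subset[rotated])
qed

end

section \<open>Points with two minimisers\<close>

lemma class_DI:
  assumes "p \<le> q" "0 < K" "fst ` S = {p..q}"
    and unique: "\<And>y y'. y \<in> S \<Longrightarrow> y' \<in> S \<Longrightarrow> fst y = fst y' \<Longrightarrow> y = y'"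
    and slope: "\<And>y y'. y \<in> S \<Longrightarrow> y' \<in> S \<Longrightarrow> fst y < fst y' \<Longrightarrow>
      (fst y' - fst y) / K \<le> snd y - snd y' \<and> snd y - snd y' \<le> K * (fst y' - fst y)"
  shows "S \<in> class_D"
proof -
  define h where "h t = snd (THE y. y \<in> S \<and> fst y = t)" for t
  have graph: "(fst y, h (fst y)) = y" if "y \<in> S" for y
  proof -
    have "(THE y'. y' \<in> S \<and> fst y' = fst y) = y"
      by (rule the_equality) (use that unique in auto)
    then show ?thesis
      by (simp add: h_def)
  qed
  have S_eq: "S = {(t, h t) | t. t \<in> {p..q}}"
  proof
    show "S \<subseteq> {(t, h t) | t. t \<in> {p..q}}"
    proof
      fix y assume "y \<in> S"
      then have "fst y \<in> {p..q}" "y = (fst y, h (fst y))"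
        using graph assms(3) by auto
      then show "y \<in> {(t, h t) | t. t \<in> {p..q}}"
        by blast
    qed
    show "{(t, h t) | t. t \<in> {p..q}} \<subseteq> S"
    proof
      fix z assume "z \<in> {(t, h t) | t. t \<in> {p..q}}"
      then obtain t where "t \<in> {p..q}" "z = (t, h t)"
        by blast
      moreover obtain y where "y \<in> S" "fst y = t"
        using \<open>t \<in> {p..q}\<close> assms(3) by (metis imageE)
      ultimately show "z \<in> S"
        using graph by metis
    qed
  qed
  have h_slope: "(t - s) / K \<le> h s - h t \<and> h s - h t \<le> K * (t - s)"
    if "s \<in> {p..q}" "t \<in> {p..q}" "s < t" for s t
  proof -
    have "(s, h s) \<in> S" "(t, h t) \<in> S"
      using that S_eq by blast+
    then show ?thesis
      using slope that(3) by fastforce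
  qed
  have h_decreasing: "h t < h s" if "s \<in> {p..q}" "t \<in> {p..q}" "s < t" for s t
  proof -
    have "0 < (t - s) / K"
      using that(3) assms(2) by simp
    then show ?thesis
      using h_slope[OF that] by linarith
  qed
  show ?thesis
    unfolding class_D_def mem_Collect_eq
    by (intro exI[of _ p] exI[of _ q] exI[of _ h] conjI assms(1) S_eq exI[of _ K] assms(2))
      (use h_slope h_decreasing in auto)
qed

lemma singleton_in_class_D: "{y} \<in> class_D"
  by (rule class_DI[of "fst y" "fst y" 1]) simp_all

definition straddle :: "pt set \<Rightarrow> pt \<Rightarrow> real \<Rightarrow> real \<Rightarrow> pt set" where
  "straddle G a \<delta> R = {y. \<exists>u\<in>Arg G y. \<exists>v\<in>Arg G y. norm u \<le> R \<and> norm v \<le> R \<and>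
      fst u + \<delta> \<le> fst a \<and> snd u + \<delta> \<le> snd a \<and> fst a + \<delta> \<le> fst v \<and> snd a + \<delta> \<le> snd v}"

lemma straddle_subset_not_unique: "0 < \<delta> \<Longrightarrow> straddle G a \<delta> R \<subseteq> dom_Arg G - udom_Arg G"
  unfolding straddle_def dom_Arg_def udom_Arg_def by force

lemma straddle_mono: "\<delta>' \<le> \<delta> \<Longrightarrow> R \<le> R' \<Longrightarrow> straddle G a \<delta> R \<subseteq> straddle G a \<delta>' R'"
  unfolding straddle_def by (smt (verit) mem_Collect_eq subsetI)

lemma straddle_antichain:
  assumes "0 < \<delta>" "y \<in> straddle G a \<delta> R" "y' \<in> straddle G a \<delta> R"
    and "fst y \<le> fst y'" "snd y \<le> snd y'"
  shows "y = y'"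
proof (rule ccontr)
  assume "y \<noteq> y'"
  then have "fst y < fst y' \<or> snd y < snd y'"
    using assms(4,5) by (auto simp: prod_eq_iff)
  obtain v where v: "v \<in> Arg G y" "fst a < fst v" "snd a < snd v"
    using assms(1,2) unfolding straddle_def by fastforce
  obtain u' where u': "u' \<in> Arg G y'" "fst u' < fst a" "snd u' < snd a"
    using assms(1,3) unfolding straddle_def by fastforce
  have "(fst u' - fst v) * (snd y' - snd y) \<le> 0" "(snd u' - snd v) * (fst y' - fst y) \<le> 0"
    using v u' assms(4,5) by (auto intro: mult_nonpos_nonneg)
  moreover have "(fst u' - fst v) * (snd y' - snd y) < 0 \<or> (snd u' - snd v) * (fst y' - fst y) < 0"
    using \<open>fst y < fst y' \<or> snd y < snd y'\<close> v u' by (auto intro: mult_neg_pos)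
  ultimately show False
    using Arg_monotone[OF v(1) u'(1)] by linarith
qed

lemma straddle_slope:
  assumes "0 < \<delta>" and y: "y \<in> straddle G a \<delta> R" and y': "y' \<in> straddle G a \<delta> R"
    and "fst y < fst y'"
  shows "\<delta> * (fst y' - fst y) \<le> R * (snd y - snd y')" "\<delta> * (snd y - snd y') \<le> R * (fst y' - fst y)"
proof -
  obtain u v where uv: "u \<in> Arg G y" "v \<in> Arg G y" "norm u \<le> R" "norm v \<le> R"
    "fst u + \<delta> \<le> fst a" "snd u + \<delta> \<le> snd a" "fst a + \<delta> \<le> fst v" "snd a + \<delta> \<le> snd v"
    using y unfolding straddle_def by blast
  obtain u' v' where uv': "u' \<in> Arg G y'" "v' \<in> Arg G y'" "norm u' \<le> R" "norm v' \<le> R"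
    "fst u' + \<delta> \<le> fst a" "snd u' + \<delta> \<le> snd a" "fst a + \<delta> \<le> fst v'" "snd a + \<delta> \<le> snd v'"
    using y' unfolding straddle_def by blast
  define d1 where "d1 = fst y' - fst y"
  define d2 where "d2 = snd y - snd y'"
  have "0 < d1"
    using assms(4) by (simp add: d1_def)
  moreover have "0 < d2"
    using straddle_antichain[OF assms(1) y y'] assms(4) by (force simp: d2_def)
  have bound: "\<bar>fst x\<bar> \<le> R" "\<bar>snd x\<bar> \<le> R" if "norm x \<le> R" for x :: pt
    using abs_fst_le_norm[of x] abs_snd_le_norm[of x] that by linarith+
  have "(snd v - snd u') * d1 \<le> (fst v - fst u') * d2"
    using Arg_monotone[OF uv(2) uv'(1)] by (simp add: d1_def d2_def algebra_simps)
  moreover have "2 * \<delta> * d1 \<le> (snd v - snd u') * d1"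
    using uv(8) uv'(6) \<open>0 < d1\<close> by (intro mult_right_mono) auto
  moreover have "(fst v - fst u') * d2 \<le> 2 * R * d2"
    using bound[OF uv(4)] bound[OF uv'(3)] \<open>0 < d2\<close> by (intro mult_right_mono) auto
  ultimately show "\<delta> * (fst y' - fst y) \<le> R * (snd y - snd y')"
    unfolding d1_def d2_def by linarith
  have "(fst v' - fst u) * d2 \<le> (snd v' - snd u) * d1"
    using Arg_monotone[OF uv(1) uv'(2)] by (simp add: d1_def d2_def algebra_simps)
  moreover have "2 * \<delta> * d2 \<le> (fst v' - fst u) * d2"
    using uv(5) uv'(7) \<open>0 < d2\<close> by (intro mult_right_mono) auto
  moreover have "(snd v' - snd u) * d1 \<le> 2 * R * d1"
    using bound[OF uv(3)] bound[OF uv'(4)] \<open>0 < d1\<close> by (intro mult_right_mono) auto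
  ultimately show "\<delta> * (snd y - snd y') \<le> R * (fst y' - fst y)"
    unfolding d1_def d2_def by linarith
qed

lemma straddle_graph_in_class_D:
  assumes "0 < \<delta>" "p \<le> q" and covers: "\<And>t. t \<in> {p..q} \<Longrightarrow> \<exists>s. (t, s) \<in> straddle G a \<delta> R"
  shows "{y \<in> straddle G a \<delta> R. fst y \<in> {p..q}} \<in> class_D"
proof -
  obtain s where "(p, s) \<in> straddle G a \<delta> R"
    using covers assms(2) by auto
  then obtain u v :: pt where "norm u \<le> R" "norm v \<le> R" "fst u + \<delta> \<le> fst a" "fst a + \<delta> \<le> fst v"
    unfolding straddle_def mem_Collect_eq by blast
  then have "\<delta> \<le> R"
    using abs_fst_le_norm[of u] abs_fst_le_norm[of v] by linarith
  then have K: "0 < R / \<delta>"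
    using assms(1) by simp
  show ?thesis
  proof (rule class_DI[OF assms(2) K])
    show "fst ` {y \<in> straddle G a \<delta> R. fst y \<in> {p..q}} = {p..q}"
    proof
      show "{p..q} \<subseteq> fst ` {y \<in> straddle G a \<delta> R. fst y \<in> {p..q}}"
      proof
        fix t assume "t \<in> {p..q}"
        then obtain s where "(t, s) \<in> straddle G a \<delta> R"
          using covers by blast
        with \<open>t \<in> {p..q}\<close> show "t \<in> fst ` {y \<in> straddle G a \<delta> R. fst y \<in> {p..q}}"
          by (force simp: image_iff)
      qed
    qed auto
  next
    fix y y' assume "y \<in> {y \<in> straddle G a \<delta> R. fst y \<in> {p..q}}"
      "y' \<in> {y \<in> straddle G a \<delta> R. fst y \<in> {p..q}}"
    then have y: "y \<in> straddle G a \<delta> R" and y': "y' \<in> straddle G a \<delta> R"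
      by auto
    show "fst y = fst y' \<Longrightarrow> y = y'"
      using straddle_antichain[OF assms(1) y y'] straddle_antichain[OF assms(1) y' y] by force
    assume "fst y < fst y'"
    from straddle_slope[OF assms(1) y y' this] assms(1) \<open>\<delta> \<le> R\<close>
    show "(fst y' - fst y) / (R / \<delta>) \<le> snd y - snd y' \<and> snd y - snd y' \<le> R / \<delta> * (fst y' - fst y)"
      by (simp add: field_simps)
  qed
qed

lemma Arg_vertical_mono:
  assumes "fst z = fst z'" "snd z < snd z'" "x \<in> Arg G z" "x' \<in> Arg G z'"
  shows "fst x \<le> fst x'"
proof -
  have "0 \<le> (fst x' - fst x) * (snd z' - snd z)"
    using Arg_monotone[OF assms(3,4)] assms(1) by simp
  then show ?thesis
    using assms(2) by (simp add: zero_le_mult_iff)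
qed

context max_monotone
begin

lemma connected_Arg_crossing:
  assumes K: "connected K" "K \<subseteq> open_box G"
    and UV: "open U" "open V" "U \<inter> V = {}" "\<And>z. z \<in> K \<Longrightarrow> Arg G z \<subseteq> U \<union> V"
    and ends: "z0 \<in> K" "Arg G z0 \<subseteq> U" "z1 \<in> K" "Arg G z1 \<subseteq> V"
  shows "\<exists>z\<in>K. Arg G z \<inter> U \<noteq> {} \<and> Arg G z \<inter> V \<noteq> {}"
proof (rule ccontr)
  define A where "A = {z \<in> open_box G. Arg G z \<subseteq> U}"
  define B where "B = {z \<in> open_box G. Arg G z \<subseteq> V}"
  assume "\<not> ?thesis"
  then have "K \<subseteq> A \<union> B"
    using K(2) UV(4) unfolding A_def B_def by blast
  moreover have "A \<inter> B \<inter> K = {}"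
    using UV(3) Arg_nonempty_if_open_box unfolding A_def B_def by blast
  moreover have "open A" "open B"
    unfolding A_def B_def using open_Arg_subset UV(1,2) by blast+
  ultimately have "A \<inter> K = {} \<or> B \<inter> K = {}"
    using connectedD[OF K(1)] by blast
  moreover have "z0 \<in> A \<inter> K" "z1 \<in> B \<inter> K"
    using ends K(2) unfolding A_def B_def by blast+
  ultimately show False
    by blast
qed

lemma vertical_Arg_crossing:
  assumes "s0 \<le> s1" "open U" "open V" "U \<inter> V = {}"
    and segment: "\<And>s. s \<in> {s0..s1} \<Longrightarrow> (t, s) \<in> open_box G \<and> Arg G (t, s) \<subseteq> U \<union> V"
    and ends: "Arg G (t, s0) \<subseteq> U" "Arg G (t, s1) \<subseteq> V"
  shows "\<exists>s. Arg G (t, s) \<inter> U \<noteq> {} \<and> Arg G (t, s) \<inter> V \<noteq> {}"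
proof -
  define K where "K = (\<lambda>s. (t, s)) ` {s0..s1}"
  have "connected K"
    unfolding K_def by (intro connected_continuous_image continuous_intros) simp
  moreover have "K \<subseteq> open_box G" "\<And>z. z \<in> K \<Longrightarrow> Arg G z \<subseteq> U \<union> V"
    using segment unfolding K_def by blast+
  moreover have "(t, s0) \<in> K" "(t, s1) \<in> K"
    using assms(1) by (auto simp: K_def)
  ultimately obtain z where "z \<in> K" "Arg G z \<inter> U \<noteq> {}" "Arg G z \<inter> V \<noteq> {}"
    using connected_Arg_crossing[OF _ _ assms(2-4) _ _ ends(1) _ ends(2)] by blast
  then show ?thesis
    unfolding K_def by blast
qed

lemma Arg_splits_near_two_minimisers:
  assumes y: "y \<in> open_box G" and A: "Arg G y = {u, v}"
    and UV: "open U" "open V" "U \<inter> V = {}" "u \<in> U" "v \<in> V"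
    and separated: "\<And>x. x \<in> V \<Longrightarrow> fst u < fst x" "\<And>x. x \<in> U \<Longrightarrow> fst x < fst v"
  shows "\<exists>\<epsilon>>0. \<forall>t. \<bar>t - fst y\<bar> < \<epsilon> \<longrightarrow> (\<exists>s. Arg G (t, s) \<inter> U \<noteq> {} \<and> Arg G (t, s) \<inter> V \<noteq> {})"
proof -
  have "y \<in> {z \<in> open_box G. Arg G z \<subseteq> U \<union> V}"
    using y A UV(4,5) by auto
  then obtain \<rho> where \<rho>: "0 < \<rho>" "ball y \<rho> \<subseteq> {z \<in> open_box G. Arg G z \<subseteq> U \<union> V}"
    using open_Arg_subset[of "U \<union> V"] UV(1,2) open_contains_ball by blast
  define \<eta> where "\<eta> = \<rho> / 2"
  have "0 < \<eta>"
    using \<rho>(1) by (simp add: \<eta>_def)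
  define below where "below = (fst y, snd y - \<eta>)"
  define above where "above = (fst y, snd y + \<eta>)"
  have "below \<in> ball y \<rho>" "above \<in> ball y \<rho>"
    using dist_le_abs_fst_abs_snd[of y below] dist_le_abs_fst_abs_snd[of y above] \<open>0 < \<eta>\<close>
    by (simp_all add: below_def above_def \<eta>_def)
  then have box: "below \<in> open_box G" "Arg G below \<subseteq> U \<union> V" "above \<in> open_box G" "Arg G above \<subseteq> U \<union> V"
    using \<rho>(2) by blast+
  have "Arg G below \<subseteq> U"
  proof
    fix x assume x: "x \<in> Arg G below"
    have "fst x \<le> fst u"
      using Arg_vertical_mono[OF _ _ x, of y u] A \<open>0 < \<eta>\<close> by (simp add: below_def)
    then show "x \<in> U"
      using x box(2) separated(1) by fastforce
  qed
  moreover have "Arg G above \<subseteq> V"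
  proof
    fix x assume x: "x \<in> Arg G above"
    have "fst v \<le> fst x"
      using Arg_vertical_mono[OF _ _ _ x, of y v] A \<open>0 < \<eta>\<close> by (simp add: above_def)
    then show "x \<in> V"
      using x box(4) separated(2) by fastforce
  qed
  ultimately obtain \<epsilon>1 \<epsilon>2 where \<epsilon>:
    "0 < \<epsilon>1" "ball below \<epsilon>1 \<subseteq> {z \<in> open_box G. Arg G z \<subseteq> U}"
    "0 < \<epsilon>2" "ball above \<epsilon>2 \<subseteq> {z \<in> open_box G. Arg G z \<subseteq> V}"
    using box(1,3) open_Arg_subset[OF UV(1)] open_Arg_subset[OF UV(2)] open_contains_ball
    by (metis (no_types, lifting) mem_Collect_eq)
  define \<epsilon> where "\<epsilon> = min (min \<epsilon>1 \<epsilon>2) \<eta>"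
  have "\<exists>s. Arg G (t, s) \<inter> U \<noteq> {} \<and> Arg G (t, s) \<inter> V \<noteq> {}" if t: "\<bar>t - fst y\<bar> < \<epsilon>" for t
  proof (rule vertical_Arg_crossing[OF _ UV(1-3)])
    show "snd y - \<eta> \<le> snd y + \<eta>"
      using \<open>0 < \<eta>\<close> by simp
    show "(t, s) \<in> open_box G \<and> Arg G (t, s) \<subseteq> U \<union> V" if s: "s \<in> {snd y - \<eta>..snd y + \<eta>}" for s
    proof -
      have "dist y (t, s) \<le> \<bar>t - fst y\<bar> + \<bar>s - snd y\<bar>"
        using dist_le_abs_fst_abs_snd[of y "(t, s)"] by (simp add: abs_minus_commute)
      moreover have "\<bar>t - fst y\<bar> < \<eta>" "\<bar>s - snd y\<bar> \<le> \<eta>"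
        using t s by (auto simp: \<epsilon>_def)
      ultimately have "(t, s) \<in> ball y \<rho>"
        by (simp add: \<eta>_def)
      then show ?thesis
        using \<rho>(2) by blast
    qed
    have "(t, snd y - \<eta>) \<in> ball below \<epsilon>1" "(t, snd y + \<eta>) \<in> ball above \<epsilon>2"
      using t by (simp_all add: below_def above_def dist_Pair_Pair \<epsilon>_def dist_real_def abs_minus_commute)
    then show "Arg G (t, snd y - \<eta>) \<subseteq> U" "Arg G (t, snd y + \<eta>) \<subseteq> V"
      using \<epsilon>(2,4) by blast+
  qed
  moreover have "0 < \<epsilon>"
    using \<epsilon>(1,3) \<open>0 < \<eta>\<close> by (simp add: \<epsilon>_def)
  ultimately show ?thesis
    by blast
qed

lemma straddle_near_two_minimisers:
  assumes y: "y \<in> open_box G" and A: "Arg G y = {u, v}"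
    and a: "fst u < fst a" "snd u < snd a" "fst a < fst v" "snd a < snd v"
  shows "\<exists>\<epsilon>>0. \<exists>\<delta>>0. \<exists>R. \<forall>t. \<bar>t - fst y\<bar> < \<epsilon> \<longrightarrow> (\<exists>s. (t, s) \<in> straddle G a \<delta> R)"
proof -
  define \<delta> where "\<delta> = min (min (fst a - fst u) (snd a - snd u)) (min (fst v - fst a) (snd v - snd a)) / 2"
  define R where "R = max (norm u) (norm v) + \<delta>"
  have "0 < \<delta>"
    using a by (simp add: \<delta>_def)
  have gaps: "2 * \<delta> \<le> fst a - fst u" "2 * \<delta> \<le> snd a - snd u"
    "2 * \<delta> \<le> fst v - fst a" "2 * \<delta> \<le> snd v - snd a"
    by (simp_all add: \<delta>_def)
  have near: "\<bar>fst w - fst x\<bar> < \<delta> \<and> \<bar>snd w - snd x\<bar> < \<delta> \<and> norm x \<le> norm w + \<delta>"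
    if "x \<in> ball w \<delta>" for w x
  proof -
    have "norm x \<le> norm w + dist w x"
      by (metis dist_norm norm_minus_commute norm_triangle_sub)
    then show ?thesis
      using that abs_fst_le_dist[of w x] abs_snd_le_dist[of w x] by auto
  qed
  have near_u: "fst x + \<delta> \<le> fst a \<and> snd x + \<delta> \<le> snd a \<and> norm x \<le> R" if "x \<in> ball u \<delta>" for x
    using near[OF that] gaps max.cobounded1[of "norm u" "norm v"] by (auto simp: R_def)
  have near_v: "fst a + \<delta> \<le> fst x \<and> snd a + \<delta> \<le> snd x \<and> norm x \<le> R" if "x \<in> ball v \<delta>" for x
    using near[OF that] gaps max.cobounded2[of "norm v" "norm u"] by (auto simp: R_def)
  have "ball u \<delta> \<inter> ball v \<delta> = {}"
    using near_u near_v \<open>0 < \<delta>\<close> by force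
  moreover have "fst u < fst x" if "x \<in> ball v \<delta>" for x
    using near_v[OF that] gaps \<open>0 < \<delta>\<close> by linarith
  moreover have "fst x < fst v" if "x \<in> ball u \<delta>" for x
    using near_u[OF that] gaps \<open>0 < \<delta>\<close> by linarith
  ultimately obtain \<epsilon> where "0 < \<epsilon>" and split:
    "\<And>t. \<bar>t - fst y\<bar> < \<epsilon> \<Longrightarrow> \<exists>s. Arg G (t, s) \<inter> ball u \<delta> \<noteq> {} \<and> Arg G (t, s) \<inter> ball v \<delta> \<noteq> {}"
    using Arg_splits_near_two_minimisers[OF y A open_ball open_ball] \<open>0 < \<delta>\<close> by (metis centre_in_ball)
  have "\<exists>s. (t, s) \<in> straddle G a \<delta> R" if "\<bar>t - fst y\<bar> < \<epsilon>" for t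
    using split[OF that] near_u near_v unfolding straddle_def by blast
  with \<open>0 < \<epsilon>\<close> \<open>0 < \<delta>\<close> show ?thesis
    by blast
qed
end

lemma straddle_unique_height:
  assumes "0 < \<delta>" "0 < \<delta>'" "(t, s) \<in> straddle G a \<delta> R" "(t, s') \<in> straddle G a \<delta>' R'"
  shows "s = s'"
proof -
  have "(t, s) \<in> straddle G a (min \<delta> \<delta>') (max R R')" "(t, s') \<in> straddle G a (min \<delta> \<delta>') (max R R')"
    using assms(3,4) straddle_mono[of "min \<delta> \<delta>'" \<delta> R "max R R'" G a]
      straddle_mono[of "min \<delta> \<delta>'" \<delta>' R' "max R R'" G a] by auto
  moreover have "0 < min \<delta> \<delta>'"
    using assms(1,2) by simp
  ultimately show ?thesis
    using straddle_antichain[of "min \<delta> \<delta>'" "(t, s)" G a "max R R'" "(t, s')"]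
      straddle_antichain[of "min \<delta> \<delta>'" "(t, s')" G a "max R R'" "(t, s)"]
    by (cases "s \<le> s'") auto
qed

definition rational_curves :: "pt set \<Rightarrow> pt set set" where
  "rational_curves G = {S \<in> class_D. \<exists>a \<delta> R p q. a \<in> \<rat> \<times> \<rat> \<and> \<delta> \<in> \<rat> \<and> 0 < \<delta> \<and> R \<in> \<rat> \<and>
      p \<in> \<rat> \<and> q \<in> \<rat> \<and> S = {y \<in> straddle G a \<delta> R. fst y \<in> {p..q}}}"

lemma countable_rational_curves: "countable (rational_curves G)"
proof -
  have "rational_curves G \<subseteq> (\<lambda>(a, \<delta>, R, p, q). {y \<in> straddle G a \<delta> R. fst y \<in> {p..q}}) `
      ((\<rat> \<times> \<rat>) \<times> \<rat> \<times> \<rat> \<times> \<rat> \<times> \<rat>)"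
  proof
    fix S assume "S \<in> rational_curves G"
    then obtain a \<delta> R p q where "a \<in> \<rat> \<times> \<rat>" "\<delta> \<in> \<rat>" "R \<in> \<rat>" "p \<in> \<rat>" "q \<in> \<rat>"
      "S = {y \<in> straddle G a \<delta> R. fst y \<in> {p..q}}"
      unfolding rational_curves_def by blast
    then show "S \<in> (\<lambda>(a, \<delta>, R, p, q). {y \<in> straddle G a \<delta> R. fst y \<in> {p..q}}) `
        ((\<rat> \<times> \<rat>) \<times> \<rat> \<times> \<rat> \<times> \<rat> \<times> \<rat>)"
      by (intro rev_image_eqI[of "(a, \<delta>, R, p, q)"]) (simp_all add: mem_Times_iff)
  qed
  moreover have "countable ((\<rat> \<times> \<rat>) \<times> \<rat> \<times> \<rat> \<times> \<rat> \<times> \<rat>)"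
    by (intro countable_SIGMA countable_rat)
  ultimately show ?thesis
    using countable_image countable_subset by blast
qed

lemma rational_curves_subset_class_D: "rational_curves G \<subseteq> class_D"
  by (auto simp: rational_curves_def)

lemma Union_rational_curves_subset: "\<Union>(rational_curves G) \<subseteq> dom_Arg G - udom_Arg G"
  using straddle_subset_not_unique unfolding rational_curves_def by blast

lemma (in max_monotone) two_minimisers_on_rational_curve:
  assumes y: "y \<in> open_box G" and A: "Arg G y = {u, v}" and "fst u < fst v" "snd u < snd v"
  shows "y \<in> \<Union>(rational_curves G)"
proof -
  obtain a1 where a1: "a1 \<in> \<rat>" "fst u < a1" "a1 < fst v"
    using Rats_dense_in_real[OF assms(3)] by blast
  obtain a2 where a2: "a2 \<in> \<rat>" "snd u < a2" "a2 < snd v"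
    using Rats_dense_in_real[OF assms(4)] by blast
  define a where "a = (a1, a2)"
  obtain \<epsilon> \<delta> R where "0 < \<epsilon>" "0 < \<delta>" and near: "\<And>t. \<bar>t - fst y\<bar> < \<epsilon> \<Longrightarrow> \<exists>s. (t, s) \<in> straddle G a \<delta> R"
    using straddle_near_two_minimisers[OF y A, of a] a1 a2 by (auto simp: a_def)
  obtain \<delta>' where \<delta>': "\<delta>' \<in> \<rat>" "0 < \<delta>'" "\<delta>' < \<delta>"
    using Rats_dense_in_real[OF \<open>0 < \<delta>\<close>] by blast
  obtain R' where R': "R' \<in> \<rat>" "R < R'"
    using Rats_dense_in_real[of R "R + 1"] by auto
  obtain p where p: "p \<in> \<rat>" "fst y - \<epsilon> < p" "p < fst y"
    using Rats_dense_in_real[of "fst y - \<epsilon>" "fst y"] \<open>0 < \<epsilon>\<close> by auto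
  obtain q where q: "q \<in> \<rat>" "fst y < q" "q < fst y + \<epsilon>"
    using Rats_dense_in_real[of "fst y" "fst y + \<epsilon>"] \<open>0 < \<epsilon>\<close> by auto
  define S where "S = {y' \<in> straddle G a \<delta>' R'. fst y' \<in> {p..q}}"
  have covers: "\<exists>s. (t, s) \<in> straddle G a \<delta>' R'" if "t \<in> {p..q}" for t
    using near[of t] that p q straddle_mono[of \<delta>' \<delta> R R' G a] \<delta>' R' by fastforce
  have "S \<in> class_D"
    unfolding S_def using p q by (intro straddle_graph_in_class_D[OF \<delta>'(2) _ covers]) auto
  moreover have "a \<in> \<rat> \<times> \<rat>"
    using a1 a2 by (simp add: a_def)
  ultimately have "S \<in> rational_curves G"
    unfolding rational_curves_def using \<delta>' R' p(1) q(1) S_def by blast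
  moreover have "y \<in> S"
  proof -
    obtain s where s: "(fst y, s) \<in> straddle G a \<delta>' R'"
      using covers[of "fst y"] p q by auto
    define \<delta>0 where "\<delta>0 = min (min (a1 - fst u) (a2 - snd u)) (min (fst v - a1) (snd v - a2))"
    have "u \<in> Arg G y" "v \<in> Arg G y"
      using A by auto
    moreover have "norm u \<le> max (norm u) (norm v)" "norm v \<le> max (norm u) (norm v)"
      by simp_all
    moreover have "fst u + \<delta>0 \<le> fst a" "snd u + \<delta>0 \<le> snd a" "fst a + \<delta>0 \<le> fst v" "snd a + \<delta>0 \<le> snd v"
      by (simp_all add: a_def \<delta>0_def)
    ultimately have "y \<in> straddle G a \<delta>0 (max (norm u) (norm v))"
      unfolding straddle_def by blast
    then have "(fst y, snd y) \<in> straddle G a \<delta>0 (max (norm u) (norm v))"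
      by simp
    moreover have "0 < \<delta>0"
      using a1 a2 by (simp add: \<delta>0_def)
    ultimately have "s = snd y"
      using straddle_unique_height[OF \<delta>'(2) _ s] by blast
    then show ?thesis
      using s p q by (auto simp: S_def)
  qed
  ultimately show ?thesis
    by blast
qed

section \<open>Degenerate sets and the main theorem\<close>

lemma dom_Arg_subset_vertical_line:
  assumes G: "G = {z. fst z = c}"
  shows "dom_Arg G \<subseteq> G"
proof
  fix y assume "y \<in> dom_Arg G"
  then obtain x where x: "x \<in> Arg G y"
    by (auto simp: dom_Arg_def)
  show "y \<in> G"
  proof (rule ccontr)
    define k where "k = c - fst y"
    assume "y \<notin> G"
    then have "k \<noteq> 0"
      using G by (simp add: k_def)
    then have "0 < k * k"
      by (metis not_real_square_gt_zero)
    moreover have "fst x = c"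
      using Arg_in[OF x] G by simp
    then have "cost (c, snd x - k) y = cost x y - k * k"
      by (simp add: cost_def k_def algebra_simps)
    moreover have "(c, snd x - k) \<in> G"
      using G by simp
    ultimately show False
      using Arg_le[OF x] by fastforce
  qed
qed

lemma dom_Arg_subset_horizontal_line:
  assumes "G = {z. snd z = c}"
  shows "dom_Arg G \<subseteq> G"
proof
  fix y assume "y \<in> dom_Arg G"
  then have "prod.swap y \<in> dom_Arg (prod.swap ` G)"
    by (simp add: swap.dom_Arg_image)
  moreover have "prod.swap ` G = {z. fst z = c}"
    using assms by force
  ultimately show "y \<in> G"
    using dom_Arg_subset_vertical_line[of "prod.swap ` G" c] assms by auto
qed

lemma vertical_line_subset_E_set:
  assumes "G = {z. fst z = c}"
  shows "G \<subseteq> E_set G"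
proof
  fix y assume "y \<in> G"
  then have "y \<in> E_i G 1 c" "(c, snd y + 1) \<in> E_i G 1 c" "y \<noteq> (c, snd y + 1)"
    using assms by (auto simp: E_i_def coord_def prod_eq_iff)
  then show "y \<in> E_set G"
    unfolding E_set_def T_i_def by blast
qed

lemma horizontal_line_subset_E_set:
  assumes "G = {z. snd z = c}"
  shows "G \<subseteq> E_set G"
proof
  fix y assume "y \<in> G"
  then have "y \<in> E_i G 2 c" "(fst y + 1, c) \<in> E_i G 2 c" "y \<noteq> (fst y + 1, c)"
    using assms by (auto simp: E_i_def coord_def prod_eq_iff)
  then show "y \<in> E_set G"
    unfolding E_set_def T_i_def by blast
qed

lemma union_class_D_decomposition:
  assumes "E \<subseteq> L" "countable C" "C \<subseteq> class_D" "\<Union>C \<subseteq> L" "countable Z" "L - E \<subseteq> Z \<union> \<Union>C"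
  shows "\<exists>D. (\<exists>F. countable F \<and> F \<subseteq> class_D \<and> D = \<Union>F) \<and> L = D \<union> E"
proof -
  define F where "F = C \<union> (\<lambda>y. {y}) ` (Z \<inter> L)"
  have "countable F"
    using assms(2,5) by (simp add: F_def)
  moreover have "F \<subseteq> class_D"
    using assms(3) singleton_in_class_D by (auto simp: F_def)
  moreover have "L = \<Union>F \<union> E"
    using assms(1,4,6) by (auto simp: F_def)
  ultimately show ?thesis
    by blast
qed

context max_monotone
begin

lemma line_if_open_box_empty:
  assumes "open_box G = {}"
  shows "(\<exists>c. G = {z. fst z = c}) \<or> (\<exists>c. G = {z. snd z = c})"
proof -
  have shared: "fst a = fst b \<or> snd a = snd b" if ab: "a \<in> G" "b \<in> G" for a b
  proof (rule ccontr)
    assume "\<not> ?thesis"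
    then obtain p q where "p \<in> G" "q \<in> G" "fst p < fst q" "snd p < snd q"
      using comparable[OF ab] ab by (metis order_le_imp_less_or_eq)
    moreover define m where "m = ((fst p + fst q) / 2, (snd p + snd q) / 2)"
    ultimately have "m \<in> open_box G"
      unfolding open_box_def by (force simp: m_def)
    with assms show False
      by simp
  qed
  obtain x where x: "x \<in> G"
    using not_bounded_above by blast
  have line: "monotone_set {z. fst z = c}" "monotone_set {z. snd z = c}" for c
    by (auto simp: monotone_set_def cost_def)
  show ?thesis
  proof (cases "\<forall>z\<in>G. fst z = fst x")
    case True
    then have "{z. fst z = fst x} = G"
      using line(1) by (intro maximal) auto
    then show ?thesis
      by blast
  next
    case False
    then obtain r where r: "r \<in> G" "fst r \<noteq> fst x"
      by blast
    then have "snd r = snd x"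
      using shared[OF r(1) x] by simp
    have "snd z = snd x" if "z \<in> G" for z
      using shared[OF that x] shared[OF that r(1)] r(2) \<open>snd r = snd x\<close> by auto
    then have "{z. snd z = snd x} = G"
      using line(2) by (intro maximal) auto
    then show ?thesis
      by blast
  qed
qed

lemma dom_Arg_subset_E_set_if_open_box_empty:
  assumes "open_box G = {}"
  shows "dom_Arg G \<subseteq> E_set G"
proof -
  consider c where "G = {z. fst z = c}" | c where "G = {z. snd z = c}"
    using line_if_open_box_empty[OF assms] by blast
  then show ?thesis
  proof cases
    case 1
    show ?thesis
      using dom_Arg_subset_vertical_line[OF 1] vertical_line_subset_E_set[OF 1] by (rule order_trans)
  next
    case 2
    show ?thesis
      using dom_Arg_subset_horizontal_line[OF 2] horizontal_line_subset_E_set[OF 2] by (rule order_trans)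
  qed
qed

lemma multivalued_on_rational_curve:
  assumes y: "y \<in> open_box G" "y \<notin> G" and uv: "u \<in> Arg G y" "v \<in> Arg G y" "u \<noteq> v"
    and only_two: "\<And>w. w \<in> Arg G y \<Longrightarrow> w = u \<or> w = v"
  shows "y \<in> \<Union>(rational_curves G)"
proof -
  have A: "Arg G y = {u, v}" "Arg G y = {v, u}"
    using uv only_two by blast+
  consider "fst u < fst v" "snd u < snd v" | "fst v < fst u" "snd v < snd u"
    using Arg_strictly_ordered[OF y(2) uv] by blast
  then show ?thesis
  proof cases
    case 1
    then show ?thesis
      by (rule two_minimisers_on_rational_curve[OF y(1) A(1)])
  next
    case 2
    then show ?thesis
      by (rule two_minimisers_on_rational_curve[OF y(1) A(2)])
  qed
qed

lemma irregular_points_cover: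
  assumes "open_box G \<noteq> {}"
  shows "dom_Arg G - (dom_grad G \<inter> udom_Arg G) - E_set G \<subseteq>
    ({y \<in> dom_Arg G. \<not> Arg_locally_bounded G y} \<union>
     {y \<in> dom_phi G. y \<notin> open_box G \<and> y \<notin> G \<and> Arg_multivalued G y} \<union>
     {y. y \<notin> G \<and> (\<exists>u v w. u \<in> Arg G y \<and> v \<in> Arg G y \<and> w \<in> Arg G y \<and> u \<noteq> v \<and> v \<noteq> w \<and> u \<noteq> w)})
    \<union> \<Union>(rational_curves G)"
proof
  fix y assume "y \<in> dom_Arg G - (dom_grad G \<inter> udom_Arg G) - E_set G"
  then have y: "y \<in> dom_Arg G" "y \<notin> dom_grad G \<inter> udom_Arg G" "y \<notin> E_set G"
    by auto
  then obtain u where u: "u \<in> Arg G y"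
    by (auto simp: dom_Arg_def)
  show "y \<in> ({y \<in> dom_Arg G. \<not> Arg_locally_bounded G y} \<union>
     {y \<in> dom_phi G. y \<notin> open_box G \<and> y \<notin> G \<and> Arg_multivalued G y} \<union>
     {y. y \<notin> G \<and> (\<exists>u v w. u \<in> Arg G y \<and> v \<in> Arg G y \<and> w \<in> Arg G y \<and> u \<noteq> v \<and> v \<noteq> w \<and> u \<noteq> w)})
    \<union> \<Union>(rational_curves G)"
  proof (cases "Arg G y = {u}")
    case True
    then have "y \<notin> open_box G"
      using open_box_in_dom_grad y(2) by blast
    then have "\<not> Arg_locally_bounded G y"
      using boundary_in_dom_grad[OF assms y(1) _ True] y(2) by blast
    then show ?thesis
      using y(1) by blast
  next
    case False
    then obtain v where v: "v \<in> Arg G y" "v \<noteq> u"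
      using u by blast
    then have multi: "Arg_multivalued G y"
      using u unfolding Arg_multivalued_def by blast
    have "y \<notin> G"
      using mem_E_set_if_Arg[of y u] mem_E_set_if_Arg[of y v] u v y(3) by auto
    moreover have "y \<in> dom_phi G"
      using y(1) dom_Arg_subset_dom_phi by blast
    moreover have "y \<in> \<Union>(rational_curves G)"
      if "y \<in> open_box G" "\<And>w. w \<in> Arg G y \<Longrightarrow> w = u \<or> w = v"
      using multivalued_on_rational_curve[OF that(1) \<open>y \<notin> G\<close> u v(1) v(2)[symmetric] that(2)] .
    ultimately show ?thesis
      using u v multi by blast
  qed
qed

end

theorem theorem10:
  fixes G :: "(real \<times> real) set"
  assumes "maximal_monotone G"
  shows "\<exists>D. (\<exists>F. countable F \<and> F \<subseteq> class_D \<and> D = \<Union>F) \<and>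
           dom_Arg G - (dom_grad G \<inter> udom_Arg G) = D \<union> E_set G"
proof -
  interpret max_monotone G
    by (rule max_monotone.intro) (fact assms)
  have E: "E_set G \<subseteq> dom_Arg G - (dom_grad G \<inter> udom_Arg G)"
    using E_set_subset by blast
  show ?thesis
  proof (cases "open_box G = {}")
    case True
    then have "dom_Arg G - (dom_grad G \<inter> udom_Arg G) - E_set G \<subseteq> {} \<union> \<Union>{}"
      using dom_Arg_subset_E_set_if_open_box_empty by auto
    then show ?thesis
      by (intro union_class_D_decomposition[OF E]) auto
  next
    case False
    show ?thesis
    proof (rule union_class_D_decomposition[OF E countable_rational_curves
          rational_curves_subset_class_D _ _ irregular_points_cover[OF False]])
      show "\<Union>(rational_curves G) \<subseteq> dom_Arg G - (dom_grad G \<inter> udom_Arg G)"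
        using Union_rational_curves_subset by blast
    qed (use countable_not_locally_bounded countable_off_box_multivalued countable_three_minimisers in auto)
  qed
qed

end
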